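(* Let $H\subset G\subset\Sigma_k$ be subgroups and let $A$ be an object of $H\mathrm{ss}_k$. Then there is a natural isomorphism of based $G$-spaces \[ |I_H^G A|\cong G_+\wedge_H|A|. \]
   Context: $\Delta_{\mathrm{inj}}$ is the category of sets $\{0,\dots,n\}$ and monotone injections. $\Sigma_k$ acts on $(\Delta_{\mathrm{inj}}^{\mathrm{op}})^{\times k}$ by permuting factors. For a group $G$ acting on a category $\mathcal C$, $G\ltimes\mathcal C$ has the objects of $\mathcal C$ and morphisms pairs $(\alpha,f)$ with $\alpha\in G$, $f$ a morphism of $\mathcal C$, with domain that of $f$, target $\alpha$ applied to the target of $f$, and composition $(\alpha,f)\circ(\beta,g)=(\alpha\beta,\beta^{-1}(f)\circ g)$. For $H\subset\Sigma_k$, $H\mathrm{ss}_k$ is the category of functors $H\ltimes(\Delta_{\mathrm{inj}}^{\mathrm{op}})^{\times k}\to\mathrm{Set}_*$ (based $k$-fold multisemisimplicial sets with an $H$-"action" that also permutes multidegrees). For $H\subset G$, $I_H^G:H\mathrm{ss}_k\to G\mathrm{ss}_k$ is left Kan extension along $H\ltimes(\Delta_{\mathrm{inj}}^{\mathrm{op}})^{\times k}\to G\ltimes(\Delta_{\mathrm{inj}}^{\mathrm{op}})^{\times k}$. The geometric realization $|A|$ of $A\in G\mathrm{ss}_k$ is the realization of its underlying $k$-fold multisemisimplicial set; it carries the left $G$-action $\alpha[u_1,\dots,u_k,a]=[u_{\alpha^{-1}(1)},\dots,u_{\alpha^{-1}(k)},(\alpha,\mathrm{id})_*(a)]$ for $(u_1,\dots,u_k)\in\Delta^{\mathbf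 n}$, $a\in A_{\mathbf n}$. *)

theory Defs
  imports "HOL-Analysis.Analysis" "HOL-Combinatorics.Permutations"
begin

text \<open>Multidegrees: lists n = [n_1,...,n_k] standing for ([n_1],...,[n_k]), [m] = {0,...,m}.
 Indices of factors are 0,...,k-1; Sigma_k = permutations of {..<k}.\<close>
type_synonym mdeg = "nat list"
text \<open>A monotone injection [m] -> [n] is encoded by the list of its values f(0) < ... < f(m).\<close>
type_synonym minj = "nat list"
text \<open>A morphism s -> t of (Delta_inj^op)^k: (source s, target t, injections [t_i] -> [s_i]).\<close>
type_synonym cmor = "mdeg \<times> mdeg \<times> minj list"
type_synonym perm = "nat \<Rightarrow> nat"
text \<open>A morphism (alpha, f) of G |x (Delta_inj^op)^k.\<close>
type_synonym gmor = "perm \<times> cmor"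

definition mdegs :: "nat \<Rightarrow> mdeg set" where
  "mdegs k = {n. length n = k}"

definition is_minj :: "nat \<Rightarrow> nat \<Rightarrow> minj \<Rightarrow> bool" where
  "is_minj m n f \<longleftrightarrow> length f = Suc m \<and> sorted_wrt (<) f \<and> (\<forall>j\<in>set f. j \<le> n)"

definition csrc :: "cmor \<Rightarrow> mdeg" where "csrc \<phi> = fst \<phi>"
definition ctgt :: "cmor \<Rightarrow> mdeg" where "ctgt \<phi> = fst (snd \<phi>)"
definition ccomps :: "cmor \<Rightarrow> minj list" where "ccomps \<phi> = snd (snd \<phi>)"

definition cmors :: "nat \<Rightarrow> cmor set" where
  "cmors k = {\<phi>. length (csrc \<phi>) = k \<and> length (ctgt \<phi>) = k \<and> length (ccomps \<phi>) = k \<and>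
      (\<forall>i<k. is_minj (ctgt \<phi> ! i) (csrc \<phi> ! i) (ccomps \<phi> ! i))}"

definition cid :: "mdeg \<Rightarrow> cmor" where
  "cid n = (n, n, map (\<lambda>m. [0..<Suc m]) n)"

text \<open>Composition psi o phi in (Delta_inj^op)^k (phi : s -> t, psi : t -> u).\<close>
definition ccomp :: "cmor \<Rightarrow> cmor \<Rightarrow> cmor" where
  "ccomp \<psi> \<phi> = (csrc \<phi>, ctgt \<psi>,
     map (\<lambda>i. map (\<lambda>j. ccomps \<phi> ! i ! j) (ccomps \<psi> ! i)) [0..<length (ccomps \<phi>)])"

definition plist :: "perm \<Rightarrow> 'x list \<Rightarrow> 'x list" where
  "plist \<alpha> xs = map (\<lambda>i. xs ! inv \<alpha> i) [0..<length xs]"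

definition cact :: "perm \<Rightarrow> cmor \<Rightarrow> cmor" where
  "cact \<alpha> \<phi> = (plist \<alpha> (csrc \<phi>), plist \<alpha> (ctgt \<phi>), plist \<alpha> (ccomps \<phi>))"

definition perm_subgroup :: "nat \<Rightarrow> perm set \<Rightarrow> bool" where
  "perm_subgroup k G \<longleftrightarrow> (\<forall>\<alpha>\<in>G. \<alpha> permutes {..<k}) \<and> id \<in> G \<and>
      (\<forall>\<alpha>\<in>G. \<forall>\<beta>\<in>G. \<alpha> \<circ> \<beta> \<in> G) \<and> (\<forall>\<alpha>\<in>G. inv \<alpha> \<in> G)"

definition gmors :: "nat \<Rightarrow> perm set \<Rightarrow> gmor set" where
  "gmors k G = {m. fst m \<in> G \<and> snd m \<in> cmors k}"

definition gdom :: "gmor \<Rightarrow> mdeg" where "gdom m = csrc (snd m)"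
definition gcod :: "gmor \<Rightarrow> mdeg" where "gcod m = plist (fst m) (ctgt (snd m))"
definition gid :: "mdeg \<Rightarrow> gmor" where "gid n = (id, cid n)"

definition gcomp :: "gmor \<Rightarrow> gmor \<Rightarrow> gmor" where
  "gcomp m1 m2 = (fst m1 \<circ> fst m2, ccomp (cact (inv (fst m2)) (snd m1)) (snd m2))"

section \<open>Objects of H ss_k: functors H |x (Delta_inj^op)^k -> Set_*\<close>

record 'a ssobj =
  carr :: "mdeg \<Rightarrow> 'a set"
  bpt  :: "mdeg \<Rightarrow> 'a"
  fmap :: "gmor \<Rightarrow> 'a \<Rightarrow> 'a"

definition is_ss :: "nat \<Rightarrow> perm set \<Rightarrow> 'a ssobj \<Rightarrow> bool" where
  "is_ss k H A \<longleftrightarrow>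
     (\<forall>n\<in>mdegs k. bpt A n \<in> carr A n) \<and>
     (\<forall>m\<in>gmors k H. \<forall>x\<in>carr A (gdom m). fmap A m x \<in> carr A (gcod m)) \<and>
     (\<forall>m\<in>gmors k H. fmap A m (bpt A (gdom m)) = bpt A (gcod m)) \<and>
     (\<forall>n\<in>mdegs k. \<forall>x\<in>carr A n. fmap A (gid n) x = x) \<and>
     (\<forall>m1\<in>gmors k H. \<forall>m2\<in>gmors k H. gdom m1 = gcod m2 \<longrightarrow>
        (\<forall>x\<in>carr A (gdom m2). fmap A (gcomp m1 m2) x = fmap A m1 (fmap A m2 x)))"

definition nat_trans :: "nat \<Rightarrow> perm set \<Rightarrow> 'a ssobj \<Rightarrow> 'b ssobj \<Rightarrow> (mdeg \<Rightarrow> 'a \<Rightarrow> 'b) \<Rightarrow> bool" where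
  "nat_trans k H A B \<eta> \<longleftrightarrow>
     (\<forall>n\<in>mdegs k. \<eta> n ` carr A n \<subseteq> carr B n \<and> \<eta> n (bpt A n) = bpt B n) \<and>
     (\<forall>m\<in>gmors k H. \<forall>x\<in>carr A (gdom m). \<eta> (gcod m) (fmap A m x) = fmap B m (\<eta> (gdom m) x))"

text \<open>(B, eta) is a left Kan extension of A along H |x C -> G |x C (restriction to H |x C
 is just forgetting the G-morphisms outside H), via its universal property, tested against all
 objects of G ss_k with values in the same type as B.\<close>
definition is_lan :: "nat \<Rightarrow> perm set \<Rightarrow> perm set \<Rightarrow> 'a ssobj \<Rightarrow> 'b ssobj \<Rightarrow> (mdeg \<Rightarrow> 'a \<Rightarrow> 'b) \<Rightarrow> bool" where
  "is_lan k H G A B \<eta> \<longleftrightarrow> is_ss k H A \<and> is_ss k G B \<and> nat_trans k H A B \<eta> \<and>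
     (\<forall>(B'::'b ssobj) \<theta>. is_ss k G B' \<and> nat_trans k H A B' \<theta> \<longrightarrow>
        (\<exists>\<sigma>. nat_trans k G B B' \<sigma> \<and> (\<forall>n\<in>mdegs k. \<forall>x\<in>carr A n. \<sigma> n (\<eta> n x) = \<theta> n x) \<and>
           (\<forall>\<sigma>'. nat_trans k G B B' \<sigma>' \<and> (\<forall>n\<in>mdegs k. \<forall>x\<in>carr A n. \<sigma>' n (\<eta> n x) = \<theta> n x)
              \<longrightarrow> (\<forall>n\<in>mdegs k. \<forall>y\<in>carr B n. \<sigma>' n y = \<sigma> n y))))"

definition quot_top :: "'a topology \<Rightarrow> ('a \<times> 'a) set \<Rightarrow> 'a set topology" where
  "quot_top X R = topology (\<lambda>U. U \<subseteq> topspace X // R \<and> openin X (topspace X \<inter> \<Union>U))"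

text \<open>Delta^{n_1} x ... x Delta^{n_k}, a point being u with u i = barycentric coordinates
 of the i-th factor (i < k), zero elsewhere.\<close>
definition msimplex :: "mdeg \<Rightarrow> (nat \<Rightarrow> nat \<Rightarrow> real) set" where
  "msimplex n = {u. (\<forall>i<length n. (\<forall>j. 0 \<le> u i j) \<and> (\<forall>j. n ! i < j \<longrightarrow> u i j = 0) \<and>
                      (\<Sum>j\<le>n ! i. u i j) = 1) \<and> (\<forall>i j. length n \<le> i \<longrightarrow> u i j = 0)}"

definition simplex_top :: "mdeg \<Rightarrow> (nat \<Rightarrow> nat \<Rightarrow> real) topology" where
  "simplex_top n = subtopology
     (product_topology (\<lambda>_. product_topology (\<lambda>_. euclideanreal) UNIV) UNIV) (msimplex n)"

text \<open>Covariant action of phi : s -> t (injections [t_i] -> [s_i]) : Delta^t -> Delta^s.\<close>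
definition cpush :: "cmor \<Rightarrow> (nat \<Rightarrow> nat \<Rightarrow> real) \<Rightarrow> (nat \<Rightarrow> nat \<Rightarrow> real)" where
  "cpush \<phi> u = (\<lambda>i j. if i < length (ccomps \<phi>)
        then (\<Sum>l\<in>{l. l < length (ccomps \<phi> ! i) \<and> ccomps \<phi> ! i ! l = j}. u i l) else 0)"

type_synonym 'x rpre = "mdeg \<times> (nat \<Rightarrow> nat \<Rightarrow> real) \<times> 'x"
type_synonym 'x rpt = "'x rpre set"

definition pre_real :: "nat \<Rightarrow> 'x ssobj \<Rightarrow> 'x rpre topology" where
  "pre_real k A = sum_topology (\<lambda>n. prod_topology (simplex_top n) (discrete_topology (carr A n))) (mdegs k)"

text \<open>Identifications: (phi_* u, a) ~ (u, phi^* a), and all basepoint simplices are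
 identified to a single basepoint.\<close>
definition real_gen :: "nat \<Rightarrow> 'x ssobj \<Rightarrow> 'x rpre \<Rightarrow> 'x rpre \<Rightarrow> bool" where
  "real_gen k A p q \<longleftrightarrow>
     (\<exists>\<phi>\<in>cmors k. \<exists>u\<in>msimplex (ctgt \<phi>). \<exists>a\<in>carr A (csrc \<phi>).
        p = (csrc \<phi>, cpush \<phi> u, a) \<and> q = (ctgt \<phi>, u, fmap A (id, \<phi>) a)) \<or>
     (\<exists>n\<in>mdegs k. \<exists>m\<in>mdegs k. \<exists>u\<in>msimplex n. \<exists>v\<in>msimplex m.
        p = (n, u, bpt A n) \<and> q = (m, v, bpt A m))"

definition real_rel :: "nat \<Rightarrow> 'x ssobj \<Rightarrow> ('x rpre \<times> 'x rpre) set" where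
  "real_rel k A = {(p, q). p \<in> topspace (pre_real k A) \<and> q \<in> topspace (pre_real k A) \<and>
                           equivclp (real_gen k A) p q}"

definition realization :: "nat \<Rightarrow> 'x ssobj \<Rightarrow> 'x rpt topology" where
  "realization k A = quot_top (pre_real k A) (real_rel k A)"

definition real_class :: "nat \<Rightarrow> 'x ssobj \<Rightarrow> 'x rpre \<Rightarrow> 'x rpt" where
  "real_class k A p = real_rel k A `` {p}"

definition vertex0 :: "nat \<Rightarrow> nat \<Rightarrow> nat \<Rightarrow> real" where
  "vertex0 k = (\<lambda>i j. if i < k \<and> j = 0 then 1 else 0)"

definition real_base :: "nat \<Rightarrow> 'x ssobj \<Rightarrow> 'x rpt" where
  "real_base k A = real_class k A (replicate k 0, vertex0 k, bpt A (replicate k 0))"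

definition pt_act :: "nat \<Rightarrow> 'x ssobj \<Rightarrow> perm \<Rightarrow> 'x rpre \<Rightarrow> 'x rpre" where
  "pt_act k A \<alpha> p = (plist \<alpha> (fst p),
      (\<lambda>i. if i < k then fst (snd p) (inv \<alpha> i) else (\<lambda>_. 0)),
      fmap A (\<alpha>, cid (fst p)) (snd (snd p)))"

definition real_act :: "nat \<Rightarrow> 'x ssobj \<Rightarrow> perm \<Rightarrow> 'x rpt \<Rightarrow> 'x rpt" where
  "real_act k A \<alpha> x = real_class k A (pt_act k A \<alpha> (SOME p. p \<in> x))"

definition real_map :: "nat \<Rightarrow> 'x ssobj \<Rightarrow> 'y ssobj \<Rightarrow> (mdeg \<Rightarrow> 'x \<Rightarrow> 'y) \<Rightarrow> 'x rpt \<Rightarrow> 'y rpt" where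
  "real_map k A B \<sigma> x = (let p = (SOME p. p \<in> x) in
      real_class k B (fst p, fst (snd p), \<sigma> (fst p) (snd (snd p))))"

type_synonym 'x spt = "(perm \<times> 'x rpt) set"

definition smash_pre :: "nat \<Rightarrow> perm set \<Rightarrow> 'x ssobj \<Rightarrow> (perm \<times> 'x rpt) topology" where
  "smash_pre k G A = prod_topology (discrete_topology G) (realization k A)"

definition smash_gen :: "nat \<Rightarrow> perm set \<Rightarrow> perm set \<Rightarrow> 'x ssobj \<Rightarrow> perm \<times> 'x rpt \<Rightarrow> perm \<times> 'x rpt \<Rightarrow> bool" where
  "smash_gen k H G A p q \<longleftrightarrow>
     (\<exists>g\<in>G. \<exists>h\<in>H. \<exists>x\<in>topspace (realization k A). p = (g \<circ> h, x) \<and> q = (g, real_act k A h x)) \<or>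
     (\<exists>g\<in>G. \<exists>g'\<in>G. p = (g, real_base k A) \<and> q = (g', real_base k A))"

definition smash_rel :: "nat \<Rightarrow> perm set \<Rightarrow> perm set \<Rightarrow> 'x ssobj \<Rightarrow> ((perm \<times> 'x rpt) \<times> (perm \<times> 'x rpt)) set" where
  "smash_rel k H G A = {(p, q). p \<in> topspace (smash_pre k G A) \<and> q \<in> topspace (smash_pre k G A) \<and>
                               equivclp (smash_gen k H G A) p q}"

definition smash :: "nat \<Rightarrow> perm set \<Rightarrow> perm set \<Rightarrow> 'x ssobj \<Rightarrow> 'x spt topology" where
  "smash k H G A = quot_top (smash_pre k G A) (smash_rel k H G A)"

definition smash_class :: "nat \<Rightarrow> perm set \<Rightarrow> perm set \<Rightarrow> 'x ssobj \<Rightarrow> perm \<times> 'x rpt \<Rightarrow> 'x spt" where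
  "smash_class k H G A p = smash_rel k H G A `` {p}"

definition smash_base :: "nat \<Rightarrow> perm set \<Rightarrow> perm set \<Rightarrow> 'x ssobj \<Rightarrow> 'x spt" where
  "smash_base k H G A = smash_class k H G A (id, real_base k A)"

definition smash_act :: "nat \<Rightarrow> perm set \<Rightarrow> perm set \<Rightarrow> 'x ssobj \<Rightarrow> perm \<Rightarrow> 'x spt \<Rightarrow> 'x spt" where
  "smash_act k H G A \<alpha> y = (let p = (SOME p. p \<in> y) in smash_class k H G A (\<alpha> \<circ> fst p, snd p))"

definition smash_map :: "nat \<Rightarrow> perm set \<Rightarrow> perm set \<Rightarrow> 'x ssobj \<Rightarrow> 'y ssobj \<Rightarrow> (mdeg \<Rightarrow> 'x \<Rightarrow> 'y) \<Rightarrow> 'x spt \<Rightarrow> 'y spt" where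
  "smash_map k H G A A' \<psi> y = (let p = (SOME p. p \<in> y) in
      smash_class k H G A' (fst p, real_map k A A' \<psi> (snd p)))"

definition based_G_homeo :: "perm set \<Rightarrow> 'p topology \<Rightarrow> 'p \<Rightarrow> (perm \<Rightarrow> 'p \<Rightarrow> 'p) \<Rightarrow>
    'q topology \<Rightarrow> 'q \<Rightarrow> (perm \<Rightarrow> 'q \<Rightarrow> 'q) \<Rightarrow> ('p \<Rightarrow> 'q) \<Rightarrow> bool" where
  "based_G_homeo G X x0 actX Y y0 actY f \<longleftrightarrow> homeomorphic_map X Y f \<and> f x0 = y0 \<and>
     (\<forall>\<alpha>\<in>G. \<forall>x\<in>topspace X. f (actX \<alpha> x) = actY \<alpha> (f x))"

end

theory Submission
  imports Defs
begin

text \<open>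
  Put $B = I_H^G A$ with unit $\eta : A \to B$. Comparing $B$, through its universal property, with an
  explicit model shows that every simplex of $B$ has the form $g_* \eta(a)$ with $g \in G$, and that
  $g_* \eta(a) = g'_* \eta(a')$ exactly when $g' = g h$ and $a = h_* a'$ for some $h \in H$, or $a$ and $a'$
  are both basepoints. Hence $[u, g_* \eta(a)] \mapsto [g, [g^{-1} u, a]]$ is a well defined map
  $|B| \to G_+ \wedge_H |A|$: it respects the face identifications because permuting the factors
  commutes with the face maps. Its inverse is $[g, x] \mapsto g \cdot |\eta|(x)$. Both maps are induced by continuous maps on
  the disjoint unions of (products of) simplices, so they are continuous, and equivariance, the
  basepoint and naturality in $A$ are checked on representatives.
\<close>

lemma permutes_inv_lt: "a permutes {..<k} \<Longrightarrow> i < k \<Longrightarrow> inv a i < k"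
  by (metis lessThan_iff permutes_in_image permutes_inv)

lemma inv_comp_permutes: "a permutes S \<Longrightarrow> b permutes S \<Longrightarrow> inv (a \<circ> b) = inv b \<circ> inv a"
  by (simp add: o_inv_distrib permutes_bij)

lemma plist_length[simp]: "length (plist a xs) = length xs" by (simp add: plist_def)

lemma plist_nth[simp]: "i < length xs \<Longrightarrow> plist a xs ! i = xs ! inv a i" by (simp add: plist_def)

lemma plist_id[simp]: "plist id xs = xs" by (simp add: plist_def map_nth)

lemma plist_comp: assumes "a permutes {..<k}" "b permutes {..<k}" "length xs = k"
  shows "plist a (plist b xs) = plist (a \<circ> b) xs"
proof (rule nth_equalityI)
  fix i assume "i < length (plist a (plist b xs))"
  then have i: "i < k" using assms by simp
  then show "plist a (plist b xs) ! i = plist (a \<circ> b) xs ! i"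
    using assms permutes_inv_lt[OF assms(1) i] by (simp add: inv_comp_permutes[OF assms(1,2)])
qed simp

lemma plist_inv_cancel: assumes "a permutes {..<k}" "length xs = k"
  shows "plist (inv a) (plist a xs) = xs"
  using plist_comp[OF permutes_inv[OF assms(1)] assms(1,2)] permutes_inv_o(2)[OF assms(1)] by simp

lemma plist_cancel_inv: assumes "a permutes {..<k}" "length xs = k"
  shows "plist a (plist (inv a) xs) = xs"
  using plist_comp[OF assms(1) permutes_inv[OF assms(1)] assms(2)] permutes_inv_o(1)[OF assms(1)] by simp

lemma plist_map: assumes "a permutes {..<k}" "length xs = k"
  shows "plist a (map f xs) = map f (plist a xs)"
  by (rule nth_equalityI) (use assms permutes_inv_lt[OF assms(1)] in auto)

lemma plist_mdegs: "n \<in> mdegs k \<Longrightarrow> plist a n \<in> mdegs k" by (simp add: mdegs_def)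

lemma cid_simps[simp]: "csrc (cid n) = n" "ctgt (cid n) = n" "ccomps (cid n) = map (\<lambda>m. [0..<Suc m]) n"
  by (auto simp: cid_def csrc_def ctgt_def ccomps_def)

lemma cact_simps[simp]: "csrc (cact a f) = plist a (csrc f)" "ctgt (cact a f) = plist a (ctgt f)"
  "ccomps (cact a f) = plist a (ccomps f)"
  by (auto simp: cact_def csrc_def ctgt_def ccomps_def)

lemma ccomp_simps[simp]: "csrc (ccomp g f) = csrc f" "ctgt (ccomp g f) = ctgt g"
  "ccomps (ccomp g f) = map (\<lambda>i. map (\<lambda>j. ccomps f ! i ! j) (ccomps g ! i)) [0..<length (ccomps f)]"
  by (auto simp: ccomp_def csrc_def ctgt_def ccomps_def)


lemma cmor_eqI: "csrc f = csrc g \<Longrightarrow> ctgt f = ctgt g \<Longrightarrow> ccomps f = ccomps g \<Longrightarrow> f = g"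
  by (cases f, cases g) (simp add: csrc_def ctgt_def ccomps_def)

lemma is_minj_upt: "is_minj m m [0..<Suc m]" by (auto simp: is_minj_def simp del: upt_Suc)

lemma cid_cmors: "n \<in> mdegs k \<Longrightarrow> cid n \<in> cmors k"
  by (auto simp: cmors_def mdegs_def is_minj_upt simp del: upt_Suc)

lemma cact_cmors: assumes "a permutes {..<k}" "f \<in> cmors k" shows "cact a f \<in> cmors k"
  using assms permutes_inv_lt[OF assms(1)] by (auto simp: cmors_def)

lemma cact_cid: assumes "a permutes {..<k}" "length n = k" shows "cact a (cid n) = cid (plist a n)"
  by (rule cmor_eqI) (use assms plist_map in auto)

lemma cact_comp: assumes "a permutes {..<k}" "b permutes {..<k}" "f \<in> cmors k"
  shows "cact a (cact b f) = cact (a \<circ> b) f"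
  using assms by (intro cmor_eqI) (auto simp: plist_comp cmors_def)

lemma cact_id[simp]: "cact id f = f" by (rule cmor_eqI) auto

lemma cact_inv: assumes "a permutes {..<k}" "f \<in> cmors k" shows "cact (inv a) (cact a f) = f"
  using assms by (intro cmor_eqI) (auto simp: plist_inv_cancel cmors_def)

lemma ccomp_cid_left: assumes "f \<in> cmors k" shows "ccomp (cid (ctgt f)) f = f"
proof (rule cmor_eqI)
  have "\<And>i. i < k \<Longrightarrow> map ((!) (ccomps f ! i)) [0..<Suc (ctgt f ! i)] = ccomps f ! i"
    using assms by (auto simp: cmors_def is_minj_def simp del: upt_Suc intro!: nth_equalityI)
  then show "ccomps (ccomp (cid (ctgt f)) f) = ccomps f"
    using assms by (auto simp: cmors_def intro!: nth_equalityI)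
qed auto

lemma ccomp_cid_right: assumes "f \<in> cmors k" shows "ccomp f (cid (csrc f)) = f"
proof (rule cmor_eqI)
  have "\<And>i. i < k \<Longrightarrow> map (\<lambda>j. [0..<Suc (csrc f ! i)] ! j) (ccomps f ! i) = ccomps f ! i"
  proof -
    fix i assume i: "i < k"
    have "\<forall>j\<in>set (ccomps f ! i). j \<le> csrc f ! i" using assms i by (auto simp: cmors_def is_minj_def)
    then show "map (\<lambda>j. [0..<Suc (csrc f ! i)] ! j) (ccomps f ! i) = ccomps f ! i"
      by (intro nth_equalityI) (auto simp: nth_upt less_Suc_eq_le simp del: upt_Suc)
  qed
  then show "ccomps (ccomp f (cid (csrc f))) = ccomps f"
    using assms by (auto simp: cmors_def intro!: nth_equalityI)
qed auto

lemma ccomp_cid_cid: "ccomp (cid n) (cid n) = cid n"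
  by (rule cmor_eqI) (auto simp del: upt_Suc intro!: nth_equalityI)

lemma gdom_pair[simp]: "gdom (a, f) = csrc f" by (simp add: gdom_def)

lemma gcod_pair[simp]: "gcod (a, f) = plist a (ctgt f)" by (simp add: gcod_def)

lemma gid_eq: "gid n = (id, cid n)" by (simp add: gid_def)

lemma gcomp_pair: "gcomp (a, f) (b, g) = (a \<circ> b, ccomp (cact (inv b) f) g)" by (simp add: gcomp_def)

lemma gcomp_perm_cmor: assumes "f \<in> cmors k" shows "gcomp (a, cid (ctgt f)) (id, f) = (a, f)"
  using ccomp_cid_left[OF assms] by (simp add: gcomp_pair)

lemma gcomp_cmor_perm: assumes "a permutes {..<k}" "f \<in> cmors k"
  shows "gcomp (id, cact a f) (a, cid (csrc f)) = (a, f)"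
  using assms by (simp add: gcomp_pair cact_inv ccomp_cid_right)

lemma gcomp_perm_perm: assumes "a permutes {..<k}" "b permutes {..<k}" "length n = k"
  shows "gcomp (a, cid (plist b n)) (b, cid n) = (a \<circ> b, cid n)"
proof -
  have "cact (inv b) (cid (plist b n)) = cid n"
    using cact_cid[OF permutes_inv[OF assms(2)], of "plist b n"] assms plist_inv_cancel[OF assms(2,3)] by simp
  then show ?thesis by (simp add: gcomp_pair ccomp_cid_cid)
qed

lemma gcomp_mor_perm: assumes "g permutes {..<k}" "f \<in> cmors k" "plist (inv g) (csrc f) = n"
  shows "gcomp (a, f) (g, cid n) = (a \<circ> g, cact (inv g) f)"
proof -
  have "cact (inv g) f \<in> cmors k" using assms by (simp add: cact_cmors permutes_inv)
  then show ?thesis using ccomp_cid_right[of "cact (inv g) f" k] assms by (simp add: gcomp_pair)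
qed

lemma cid_inj: "cid n = cid m \<longleftrightarrow> n = m" by (metis cid_simps(1))

lemma cact_ccomp: assumes a: "a permutes {..<k}" and f: "f \<in> cmors k" and g: "g \<in> cmors k"
  shows "cact a (ccomp f g) = ccomp (cact a f) (cact a g)"
proof (rule cmor_eqI)
  have l: "length (ccomps f) = k" "length (ccomps g) = k" using f g by (auto simp: cmors_def)
  show "ccomps (cact a (ccomp f g)) = ccomps (ccomp (cact a f) (cact a g))"
    using l permutes_inv_lt[OF a] by (auto intro!: nth_equalityI)
qed auto

lemma perm_subgroup_permutes: "perm_subgroup k G \<Longrightarrow> a \<in> G \<Longrightarrow> a permutes {..<k}" by (simp add: perm_subgroup_def)

lemma perm_subgroup_id: "perm_subgroup k G \<Longrightarrow> id \<in> G" by (simp add: perm_subgroup_def)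

lemma perm_subgroup_comp: "perm_subgroup k G \<Longrightarrow> a \<in> G \<Longrightarrow> b \<in> G \<Longrightarrow> a \<circ> b \<in> G" by (simp add: perm_subgroup_def)

lemma perm_subgroup_inv: "perm_subgroup k G \<Longrightarrow> a \<in> G \<Longrightarrow> inv a \<in> G" by (simp add: perm_subgroup_def)

lemma gmorsI: "a \<in> G \<Longrightarrow> f \<in> cmors k \<Longrightarrow> (a, f) \<in> gmors k G" by (simp add: gmors_def)

lemma mdegsI: "length n = k \<Longrightarrow> n \<in> mdegs k" by (simp add: mdegs_def)

lemma mdegsD: "n \<in> mdegs k \<Longrightarrow> length n = k" by (simp add: mdegs_def)

lemma csrc_mdegs: "f \<in> cmors k \<Longrightarrow> csrc f \<in> mdegs k" by (simp add: cmors_def mdegs_def)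

lemma ctgt_mdegs: "f \<in> cmors k \<Longrightarrow> ctgt f \<in> mdegs k" by (simp add: cmors_def mdegs_def)

lemma ss_fmap_carr: "is_ss k K C \<Longrightarrow> m \<in> gmors k K \<Longrightarrow> x \<in> carr C (gdom m) \<Longrightarrow> fmap C m x \<in> carr C (gcod m)"
  by (simp add: is_ss_def)

lemma ss_bpt_carr: "is_ss k K C \<Longrightarrow> n \<in> mdegs k \<Longrightarrow> bpt C n \<in> carr C n"
  by (simp add: is_ss_def)

lemma ss_fmap_bpt: "is_ss k K C \<Longrightarrow> m \<in> gmors k K \<Longrightarrow> fmap C m (bpt C (gdom m)) = bpt C (gcod m)"
  by (simp add: is_ss_def)

lemma ss_fmap_id: "is_ss k K C \<Longrightarrow> n \<in> mdegs k \<Longrightarrow> x \<in> carr C n \<Longrightarrow> fmap C (id, cid n) x = x"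
  by (simp add: is_ss_def gid_def)

lemma ss_fmap_comp: "is_ss k K C \<Longrightarrow> m1 \<in> gmors k K \<Longrightarrow> m2 \<in> gmors k K \<Longrightarrow> gdom m1 = gcod m2 \<Longrightarrow>
   x \<in> carr C (gdom m2) \<Longrightarrow> fmap C (gcomp m1 m2) x = fmap C m1 (fmap C m2 x)"
  by (simp add: is_ss_def)

lemma ss_fmap_pair_carr: "is_ss k K C \<Longrightarrow> a \<in> K \<Longrightarrow> f \<in> cmors k \<Longrightarrow> x \<in> carr C (csrc f) \<Longrightarrow>
   fmap C (a, f) x \<in> carr C (plist a (ctgt f))"
  using ss_fmap_carr[of k K C "(a,f)" x] by (simp add: gmorsI)

lemma ss_fmap_perm_cmor: assumes "perm_subgroup k K" "is_ss k K C" "a \<in> K" "f \<in> cmors k" "x \<in> carr C (csrc f)"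
  shows "fmap C (a, f) x = fmap C (a, cid (ctgt f)) (fmap C (id, f) x)"
  using ss_fmap_comp[OF assms(2), of "(a, cid (ctgt f))" "(id, f)" x] gcomp_perm_cmor[OF assms(4), of a] assms
  by (simp add: gmorsI perm_subgroup_id cid_cmors ctgt_mdegs)

lemma ss_fmap_cmor_perm: assumes "perm_subgroup k K" "is_ss k K C" "a \<in> K" "f \<in> cmors k" "x \<in> carr C (csrc f)"
  shows "fmap C (a, f) x = fmap C (id, cact a f) (fmap C (a, cid (csrc f)) x)"
  using ss_fmap_comp[OF assms(2), of "(id, cact a f)" "(a, cid (csrc f))" x] gcomp_cmor_perm[OF perm_subgroup_permutes[OF assms(1,3)] assms(4)] assms
  by (simp add: gmorsI perm_subgroup_id cid_cmors csrc_mdegs cact_cmors perm_subgroup_permutes)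

lemma ss_fmap_perm_perm: assumes "perm_subgroup k K" "is_ss k K C" "a \<in> K" "b \<in> K" "n \<in> mdegs k" "x \<in> carr C n"
  shows "fmap C (a, cid (plist b n)) (fmap C (b, cid n) x) = fmap C (a \<circ> b, cid n) x"
  using ss_fmap_comp[OF assms(2), of "(a, cid (plist b n))" "(b, cid n)" x]
    gcomp_perm_perm[OF perm_subgroup_permutes[OF assms(1,3)] perm_subgroup_permutes[OF assms(1,4)] mdegsD[OF assms(5)]] assms
  by (simp add: gmorsI cid_cmors plist_mdegs)

lemma ss_fmap_perm_inv: assumes "perm_subgroup k K" "is_ss k K C" "a \<in> K" "n \<in> mdegs k" "x \<in> carr C n"
  shows "fmap C (inv a, cid (plist a n)) (fmap C (a, cid n) x) = x"
  using ss_fmap_perm_perm[OF assms(1,2) perm_subgroup_inv[OF assms(1,3)] assms(3,4,5)] permutes_inv_o(2)[OF perm_subgroup_permutes[OF assms(1,3)]]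
    ss_fmap_id[OF assms(2,4,5)] by simp

lemma ss_fmap_perm_bpt: "is_ss k K C \<Longrightarrow> a \<in> K \<Longrightarrow> n \<in> mdegs k \<Longrightarrow> fmap C (a, cid n) (bpt C n) = bpt C (plist a n)"
  using ss_fmap_bpt[of k K C "(a, cid n)"] by (simp add: gmorsI cid_cmors)

lemma ss_fmap_perm_eq_bpt_iff:
  assumes K: "perm_subgroup k K" and C: "is_ss k K C" and a: "a \<in> K" and n: "n \<in> mdegs k" and x: "x \<in> carr C n"
  shows "fmap C (a, cid n) x = bpt C (plist a n) \<longleftrightarrow> x = bpt C n"
proof
  assume e: "fmap C (a, cid n) x = bpt C (plist a n)"
  have "x = fmap C (inv a, cid (plist a n)) (fmap C (a, cid n) x)"
    using ss_fmap_perm_inv[OF K C a n x] by simp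
  also have "\<dots> = bpt C (plist (inv a) (plist a n))"
    unfolding e by (rule ss_fmap_perm_bpt[OF C perm_subgroup_inv[OF K a] plist_mdegs[OF n]])
  also have "plist (inv a) (plist a n) = n"
    using plist_inv_cancel[OF perm_subgroup_permutes[OF K a] mdegsD[OF n]] .
  finally show "x = bpt C n" .
qed (simp add: ss_fmap_perm_bpt[OF C a n])

lemma ss_fmap_cact_perm:
  assumes "perm_subgroup k K" "is_ss k K C" "a \<in> K" "f \<in> cmors k" "x \<in> carr C (csrc f)"
  shows "fmap C (id, cact a f) (fmap C (a, cid (csrc f)) x) = fmap C (a, cid (ctgt f)) (fmap C (id, f) x)"
  using ss_fmap_cmor_perm[OF assms] ss_fmap_perm_cmor[OF assms] by simp

lemma ss_mono: "is_ss k G C \<Longrightarrow> H \<subseteq> G \<Longrightarrow> is_ss k H C"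
  unfolding is_ss_def gmors_def by blast

lemma nat_trans_carr: "nat_trans k K C D s \<Longrightarrow> n \<in> mdegs k \<Longrightarrow> x \<in> carr C n \<Longrightarrow> s n x \<in> carr D n"
  by (auto simp: nat_trans_def)

lemma nat_trans_bpt: "nat_trans k K C D s \<Longrightarrow> n \<in> mdegs k \<Longrightarrow> s n (bpt C n) = bpt D n"
  by (auto simp: nat_trans_def)

lemma nat_trans_fmap: "nat_trans k K C D s \<Longrightarrow> a \<in> K \<Longrightarrow> f \<in> cmors k \<Longrightarrow> x \<in> carr C (csrc f) \<Longrightarrow>
   s (plist a (ctgt f)) (fmap C (a, f) x) = fmap D (a, f) (s (csrc f) x)"
  unfolding nat_trans_def by (drule conjunct2, drule bspec[of _ _ "(a, f)"]) (auto simp: gmorsI)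

lemma nat_trans_comp: assumes "nat_trans k K C D s" "nat_trans k K D E t"
  shows "nat_trans k K C E (\<lambda>n x. t n (s n x))"
  unfolding nat_trans_def
proof (intro conjI ballI)
  fix n assume n: "n \<in> mdegs k"
  show "(\<lambda>x. t n (s n x)) ` carr C n \<subseteq> carr E n"
    using nat_trans_carr[OF assms(2) n] nat_trans_carr[OF assms(1) n] by auto
  show "t n (s n (bpt C n)) = bpt E n" using assms n by (auto simp: nat_trans_def)
next
  fix m x assume m: "m \<in> gmors k K" and x: "x \<in> carr C (gdom m)"
  have d: "gdom m \<in> mdegs k" using m by (cases m) (auto simp: gmors_def csrc_mdegs)
  have sx: "s (gdom m) x \<in> carr D (gdom m)" using assms(1) d x by (auto simp: nat_trans_def)
  have "s (gcod m) (fmap C m x) = fmap D m (s (gdom m) x)" using assms(1) m x by (simp add: nat_trans_def)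
  moreover have "t (gcod m) (fmap D m (s (gdom m) x)) = fmap E m (t (gdom m) (s (gdom m) x))"
    using assms(2) m sx by (simp add: nat_trans_def)
  ultimately show "t (gcod m) (s (gcod m) (fmap C m x)) = fmap E m (t (gdom m) (s (gdom m) x))" by simp
qed

lemma nat_trans_id: "is_ss k K C \<Longrightarrow> nat_trans k K C C (\<lambda>n x. x)"
  unfolding nat_trans_def by auto

definition uperm :: "nat \<Rightarrow> perm \<Rightarrow> (nat \<Rightarrow> nat \<Rightarrow> real) \<Rightarrow> (nat \<Rightarrow> nat \<Rightarrow> real)" where
  "uperm k a u = (\<lambda>i. if i < k then u (inv a i) else (\<lambda>_. 0))"

lemma msimplexD: "u \<in> msimplex n \<Longrightarrow> i < length n \<Longrightarrow> 0 \<le> u i j"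
    "u \<in> msimplex n \<Longrightarrow> i < length n \<Longrightarrow> n ! i < j \<Longrightarrow> u i j = 0"
    "u \<in> msimplex n \<Longrightarrow> i < length n \<Longrightarrow> (\<Sum>j\<le>n ! i. u i j) = 1"
    "u \<in> msimplex n \<Longrightarrow> length n \<le> i \<Longrightarrow> u i j = 0"
  by (auto simp: msimplex_def)

lemma uperm_msimplex: assumes "u \<in> msimplex n" "length n = k" "a permutes {..<k}"
  shows "uperm k a u \<in> msimplex (plist a n)"
  using assms permutes_inv_lt[OF assms(3)] by (auto simp: msimplex_def uperm_def)

lemma uperm_comp: assumes "a permutes {..<k}" "b permutes {..<k}"
  shows "uperm k a (uperm k b u) = uperm k (a \<circ> b) u"
  using permutes_inv_lt[OF assms(1)] by (auto simp: uperm_def inv_comp_permutes[OF assms] fun_eq_iff)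

lemma uperm_id: assumes "u \<in> msimplex n" "length n = k" shows "uperm k id u = u"
  using assms by (auto simp: uperm_def fun_eq_iff msimplex_def)

lemma uperm_inv: assumes "u \<in> msimplex n" "length n = k" "a permutes {..<k}"
  shows "uperm k (inv a) (uperm k a u) = u"
  using uperm_comp[OF permutes_inv[OF assms(3)] assms(3)] permutes_inv_o(2)[OF assms(3)] uperm_id[OF assms(1,2)]
  by simp

lemma cpush_msimplex: assumes f: "f \<in> cmors k" and u: "u \<in> msimplex (ctgt f)"
  shows "cpush f u \<in> msimplex (csrc f)"
proof -
  have len: "length (csrc f) = k" "length (ctgt f) = k" "length (ccomps f) = k" using f by (auto simp: cmors_def)
  have mi: "\<And>i. i < k \<Longrightarrow> is_minj (ctgt f ! i) (csrc f ! i) (ccomps f ! i)" using f by (auto simp: cmors_def)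
  show ?thesis unfolding msimplex_def
  proof (intro CollectI conjI allI impI)
    fix i j assume i: "i < length (csrc f)"
    show "0 \<le> cpush f u i j" using i len msimplexD(1)[OF u] by (auto simp: cpush_def intro!: sum_nonneg)
  next
    fix i j assume i: "i < length (csrc f)" and j: "csrc f ! i < j"
    have "{l. l < length (ccomps f ! i) \<and> ccomps f ! i ! l = j} = {}"
      using mi[of i] i len j by (auto simp: is_minj_def) (metis leD nth_mem)
    note E = this
    show "cpush f u i j = 0" unfolding cpush_def E by simp
  next
    fix i assume i: "i < length (csrc f)"
    let ?c = "ccomps f ! i"
    have "(\<Sum>j\<le>csrc f ! i. cpush f u i j) = (\<Sum>j\<le>csrc f ! i. \<Sum>l\<in>{l. l \<in> {..<length ?c} \<and> ?c ! l = j}. u i l)"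
      using i len by (simp add: cpush_def)
    also have "\<dots> = (\<Sum>l<length ?c. u i l)"
      by (rule sum.group) (use mi[of i] i len in \<open>auto simp: is_minj_def\<close>)
    also have "\<dots> = (\<Sum>l\<le>ctgt f ! i. u i l)"
      using mi[of i] i len by (simp add: is_minj_def lessThan_Suc_atMost)
    also have "\<dots> = 1" using msimplexD(3)[OF u, of i] i len by simp
    finally show "(\<Sum>j\<le>csrc f ! i. cpush f u i j) = 1" .
  next
    fix i j assume "length (csrc f) \<le> i"
    then show "cpush f u i j = 0" using len by (simp add: cpush_def)
  qed
qed

lemma uperm_cpush: assumes f: "f \<in> cmors k" and a: "a permutes {..<k}"
  shows "uperm k a (cpush f u) = cpush (cact a f) (uperm k a u)"
  using f permutes_inv_lt[OF a] by (auto simp: uperm_def cpush_def cmors_def fun_eq_iff)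

lemma topspace_simplex_top[simp]: "topspace (simplex_top n) = msimplex n"
  by (simp add: simplex_top_def)

lemma continuous_map_simplex_coord: "continuous_map (simplex_top n) euclideanreal (\<lambda>u. u i j)"
proof -
  have "continuous_map (product_topology (\<lambda>_. product_topology (\<lambda>_. euclideanreal) UNIV) UNIV)
      euclideanreal ((\<lambda>v. v j) \<circ> (\<lambda>u. u i))"
    by (rule continuous_map_compose; rule continuous_map_product_projection) simp_all
  then show ?thesis unfolding simplex_top_def by (simp add: o_def continuous_map_from_subtopology)
qed

lemma continuous_map_uperm: assumes a: "a permutes {..<k}" and n: "length n = k"
  shows "continuous_map (simplex_top n) (simplex_top (plist a n)) (uperm k a)"
  unfolding simplex_top_def[of "plist a n"]
proof (rule continuous_map_into_subtopology)
  show "continuous_map (simplex_top n) (product_topology (\<lambda>_. product_topology (\<lambda>_. euclideanreal) UNIV) UNIV) (uperm k a)"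
    unfolding continuous_map_componentwise_UNIV
  proof (intro allI)
    fix i j
    show "continuous_map (simplex_top n) euclideanreal (\<lambda>x. uperm k a x i j)"
      by (cases "i < k") (simp_all add: uperm_def continuous_map_simplex_coord)
  qed
  show "uperm k a \<in> topspace (simplex_top n) \<rightarrow> msimplex (plist a n)"
    using uperm_msimplex[OF _ n a] by auto
qed

section \<open>Quotient topologies\<close>

lemma istopology_quot_top: assumes "equiv (topspace X) R"
  shows "istopology (\<lambda>U. U \<subseteq> topspace X // R \<and> openin X (topspace X \<inter> \<Union>U))"
  unfolding istopology_def
proof (rule conjI; intro allI impI)
  fix S T assume S: "S \<subseteq> topspace X // R \<and> openin X (topspace X \<inter> \<Union>S)"
    and T: "T \<subseteq> topspace X // R \<and> openin X (topspace X \<inter> \<Union>T)"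
  have "\<Union>(S \<inter> T) = \<Union>S \<inter> \<Union>T"
  proof
    show "\<Union>S \<inter> \<Union>T \<subseteq> \<Union>(S \<inter> T)"
    proof
      fix x assume "x \<in> \<Union>S \<inter> \<Union>T"
      then obtain c d where c: "c \<in> S" "x \<in> c" and d: "d \<in> T" "x \<in> d" by auto
      have "c \<in> topspace X // R" "d \<in> topspace X // R" using c d S T by blast+
      then have "c = d" using quotient_disj[OF assms, of c d] c d by blast
      then show "x \<in> \<Union>(S \<inter> T)" using c d by auto
    qed
  qed auto
  then have "topspace X \<inter> \<Union>(S \<inter> T) = (topspace X \<inter> \<Union>S) \<inter> (topspace X \<inter> \<Union>T)" by auto
  moreover have "openin X ((topspace X \<inter> \<Union>S) \<inter> (topspace X \<inter> \<Union>T))"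
    by (rule openin_Int) (use S T in blast)+
  ultimately have "openin X (topspace X \<inter> \<Union>(S \<inter> T))" by simp
  moreover have "S \<inter> T \<subseteq> topspace X // R" using S by blast
  ultimately show "S \<inter> T \<subseteq> topspace X // R \<and> openin X (topspace X \<inter> \<Union>(S \<inter> T))"
    by blast
next
  fix K assume K: "\<forall>U\<in>K. U \<subseteq> topspace X // R \<and> openin X (topspace X \<inter> \<Union>U)"
  have "topspace X \<inter> \<Union>(\<Union>K) = (\<Union>U\<in>K. topspace X \<inter> \<Union>U)" by auto
  moreover have "openin X (\<Union>U\<in>K. topspace X \<inter> \<Union>U)" using K by (intro openin_Union) auto
  ultimately have "openin X (topspace X \<inter> \<Union>(\<Union>K))" by simp
  moreover have "\<Union>K \<subseteq> topspace X // R" using K by blast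
  ultimately show "\<Union>K \<subseteq> topspace X // R \<and> openin X (topspace X \<inter> \<Union>(\<Union>K))"
    by blast
qed

lemma openin_quot_top: assumes "equiv (topspace X) R"
  shows "openin (quot_top X R) U \<longleftrightarrow> U \<subseteq> topspace X // R \<and> openin X (topspace X \<inter> \<Union>U)"
  using istopology_quot_top[OF assms] by (simp add: quot_top_def)

lemma topspace_quot_top: assumes "equiv (topspace X) R"
  shows "topspace (quot_top X R) = topspace X // R"
proof -
  have "topspace X \<inter> \<Union>(topspace X // R) = topspace X"
    using Union_quotient[OF assms] by simp
  then have "openin (quot_top X R) (topspace X // R)" using openin_quot_top[OF assms] by simp
  then have "topspace X // R \<subseteq> topspace (quot_top X R)" by (simp add: openin_subset)
  moreover have "topspace (quot_top X R) \<subseteq> topspace X // R"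
    using openin_quot_top[OF assms, of "topspace (quot_top X R)"] by auto
  ultimately show ?thesis by auto
qed

lemma quotient_map_quot_top: assumes "equiv (topspace X) R"
  shows "quotient_map X (quot_top X R) (\<lambda>x. R `` {x})"
  unfolding quotient_map_def
proof (intro conjI allI impI)
  show "(\<lambda>x. R `` {x}) ` topspace X = topspace (quot_top X R)"
    unfolding topspace_quot_top[OF assms] quotient_def by auto
next
  fix U assume U: "U \<subseteq> topspace (quot_top X R)"
  have "{x \<in> topspace X. R `` {x} \<in> U} = topspace X \<inter> \<Union>U"
  proof
    show "topspace X \<inter> \<Union>U \<subseteq> {x \<in> topspace X. R `` {x} \<in> U}"
    proof
      fix x assume x: "x \<in> topspace X \<inter> \<Union>U"
      then obtain c where c: "c \<in> U" "x \<in> c" by auto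
      then have "c \<in> topspace X // R" using U topspace_quot_top[OF assms] by auto
      then obtain y where "y \<in> topspace X" "c = R `` {y}" by (auto simp: quotient_def)
      then have "(y, x) \<in> R" using c(2) by simp
      then have "R `` {x} = c" using equiv_class_eq[OF assms] \<open>c = R `` {y}\<close> by metis
      then show "x \<in> {x \<in> topspace X. R `` {x} \<in> U}" using x c by auto
    qed
  next
    show "{x \<in> topspace X. R `` {x} \<in> U} \<subseteq> topspace X \<inter> \<Union>U"
    proof
      fix x assume x: "x \<in> {x \<in> topspace X. R `` {x} \<in> U}"
      then have "x \<in> R `` {x}" using equiv_class_self[OF assms] by blast
      then show "x \<in> topspace X \<inter> \<Union>U" using x by blast
    qed
  qed
  then show "openin X {x \<in> topspace X. R `` {x} \<in> U} = openin (quot_top X R) U"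
    using U openin_quot_top[OF assms] topspace_quot_top[OF assms] by auto
qed

lemma continuous_map_from_sum_topology:
  assumes "\<And>i. i \<in> I \<Longrightarrow> continuous_map (X i) Y (\<lambda>x. f (i, x))"
  shows "continuous_map (sum_topology X I) Y f"
  unfolding continuous_map_def
proof (intro conjI allI impI)
  show "f \<in> topspace (sum_topology X I) \<rightarrow> topspace Y"
    using assms by (auto simp: continuous_map_def Pi_iff)
next
  fix U assume U: "openin Y U"
  have "\<And>i. i \<in> I \<Longrightarrow> openin (X i) {x. (i, x) \<in> {x \<in> topspace (sum_topology X I). f x \<in> U}}"
  proof -
    fix i assume i: "i \<in> I"
    have "{x. (i, x) \<in> {x \<in> topspace (sum_topology X I). f x \<in> U}} = {x \<in> topspace (X i). f (i, x) \<in> U}"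
      using i by auto
    then show "openin (X i) {x. (i, x) \<in> {x \<in> topspace (sum_topology X I). f x \<in> U}}"
      using assms[OF i] U by (simp add: continuous_map_def)
  qed
  then show "openin (sum_topology X I) {x \<in> topspace (sum_topology X I). f x \<in> U}"
    by (subst openin_sum_topology) auto
qed

lemma continuous_map_from_discrete_prod:
  assumes "\<And>s. s \<in> S \<Longrightarrow> continuous_map X Y (\<lambda>x. f (s, x))"
  shows "continuous_map (prod_topology (discrete_topology S) X) Y f"
  unfolding continuous_map_def
proof (intro conjI allI impI)
  show "f \<in> topspace (prod_topology (discrete_topology S) X) \<rightarrow> topspace Y"
    using assms by (auto simp: continuous_map_def Pi_iff)
next
  fix U assume U: "openin Y U"
  show "openin (prod_topology (discrete_topology S) X) {x \<in> topspace (prod_topology (discrete_topology S) X). f x \<in> U}"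
    unfolding openin_prod_topology_alt
  proof (intro allI impI)
    fix s x assume p: "(s, x) \<in> {x \<in> topspace (prod_topology (discrete_topology S) X). f x \<in> U}"
    have s: "s \<in> S" and x: "x \<in> topspace X" and fx: "f (s, x) \<in> U" using p by auto
    let ?V = "{y \<in> topspace X. f (s, y) \<in> U}"
    have "openin X ?V" using assms[OF s] U by (simp add: continuous_map_def)
    moreover have "openin (discrete_topology S) {s}" using s by simp
    moreover have "{s} \<times> ?V \<subseteq> {x \<in> topspace (prod_topology (discrete_topology S) X). f x \<in> U}"
      using s by auto
    ultimately show "\<exists>Ua V. openin (discrete_topology S) Ua \<and> openin X V \<and> s \<in> Ua \<and> x \<in> V \<and>
         Ua \<times> V \<subseteq> {x \<in> topspace (prod_topology (discrete_topology S) X). f x \<in> U}"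
      using x fx by blast
  qed
qed

lemma continuous_map_from_prod_discrete:
  assumes "\<And>s. s \<in> S \<Longrightarrow> continuous_map X Y (\<lambda>x. f (x, s))"
  shows "continuous_map (prod_topology X (discrete_topology S)) Y f"
proof -
  have "continuous_map (prod_topology (discrete_topology S) X) Y (\<lambda>p. f (snd p, fst p))"
    by (rule continuous_map_from_discrete_prod) (simp add: assms)
  then have "continuous_map (prod_topology X (discrete_topology S)) Y ((\<lambda>p. f (snd p, fst p)) \<circ> (\<lambda>p. (snd p, fst p)))"
    by (rule continuous_map_compose[rotated]) (intro continuous_map_pairedI continuous_map_fst continuous_map_snd)
  then show ?thesis by (simp add: o_def)
qed

section \<open>Geometric realization\<close>

lemma topspace_pre_real: "topspace (pre_real k C) = Sigma (mdegs k) (\<lambda>n. msimplex n \<times> carr C n)"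
  by (auto simp: pre_real_def)

lemma in_topspace_pre_real[simp]: "(n, u, x) \<in> topspace (pre_real k C) \<longleftrightarrow> n \<in> mdegs k \<and> u \<in> msimplex n \<and> x \<in> carr C n"
  by (simp add: topspace_pre_real)

lemma continuous_map_simplex_inclusion: assumes n: "n \<in> mdegs k" and c: "c \<in> carr C n"
  shows "continuous_map (simplex_top n) (pre_real k C) (\<lambda>v. (n, v, c))"
proof -
  have "continuous_map (simplex_top n) (prod_topology (simplex_top n) (discrete_topology (carr C n))) (\<lambda>v. (v, c))"
    by (rule continuous_map_pairedI) (use c in simp_all)
  moreover have "continuous_map (prod_topology (simplex_top n) (discrete_topology (carr C n))) (pre_real k C) (\<lambda>x. (n, x))"
    unfolding pre_real_def using continuous_map_component_injection[OF n,
        of "\<lambda>n. prod_topology (simplex_top n) (discrete_topology (carr C n))"] .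
  ultimately show ?thesis using continuous_map_compose by (fastforce simp: o_def)
qed

lemma continuous_map_from_pre_real:
  assumes "\<And>n c. n \<in> mdegs k \<Longrightarrow> c \<in> carr C n \<Longrightarrow> continuous_map (simplex_top n) Y (\<lambda>u. f (n, u, c))"
  shows "continuous_map (pre_real k C) Y f"
  unfolding pre_real_def
  by (rule continuous_map_from_sum_topology, rule continuous_map_from_prod_discrete) (use assms in simp)

lemma pt_act_triple: "pt_act k C a (n, u, x) = (plist a n, uperm k a u, fmap C (a, cid n) x)"
  unfolding pt_act_def uperm_def by (simp cong: if_cong)

context
  fixes k K C
  assumes K: "perm_subgroup k K" and C: "is_ss k K C"
begin

lemma real_gen_topspace: "real_gen k C p q \<Longrightarrow> p \<in> topspace (pre_real k C) \<and> q \<in> topspace (pre_real k C)"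
  unfolding real_gen_def
proof (elim disjE bexE conjE)
  fix f u x assume f: "f \<in> cmors k" and u: "u \<in> msimplex (ctgt f)" and x: "x \<in> carr C (csrc f)"
    and p: "p = (csrc f, cpush f u, x)" and q: "q = (ctgt f, u, fmap C (id, f) x)"
  show ?thesis using p q f u x cpush_msimplex[OF f u] ss_fmap_pair_carr[OF C perm_subgroup_id[OF K] f x]
    by (simp add: csrc_mdegs ctgt_mdegs)
next
  fix n m u v assume "n \<in> mdegs k" "m \<in> mdegs k" "u \<in> msimplex n" "v \<in> msimplex m"
    "p = (n, u, bpt C n)" "q = (m, v, bpt C m)"
  then show ?thesis using ss_bpt_carr[OF C] by simp
qed

lemma real_rel_equiv: "equiv (topspace (pre_real k C)) (real_rel k C)"
  unfolding equiv_def refl_on_def sym_def trans_def real_rel_def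
  by (auto intro: equivclp_sym equivclp_trans)

lemma real_class_eq_iff: "p \<in> topspace (pre_real k C) \<Longrightarrow> q \<in> topspace (pre_real k C) \<Longrightarrow>
   real_class k C p = real_class k C q \<longleftrightarrow> equivclp (real_gen k C) p q"
  unfolding real_class_def using eq_equiv_class_iff[OF real_rel_equiv] by (simp add: real_rel_def)

lemma real_class_gen: "real_gen k C p q \<Longrightarrow> real_class k C p = real_class k C q"
  using real_gen_topspace real_class_eq_iff by (meson equivclp_into_equivclp equivclp_refl)

lemma real_class_self: "p \<in> topspace (pre_real k C) \<Longrightarrow> p \<in> real_class k C p"
  unfolding real_class_def using equiv_class_self[OF real_rel_equiv] by blast

lemma topspace_realization: "topspace (realization k C) = topspace (pre_real k C) // real_rel k C"
  unfolding realization_def using topspace_quot_top[OF real_rel_equiv] .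

lemma real_class_topspace: "p \<in> topspace (pre_real k C) \<Longrightarrow> real_class k C p \<in> topspace (realization k C)"
  unfolding topspace_realization real_class_def by (rule quotientI)

lemma quotient_map_real_class: "quotient_map (pre_real k C) (realization k C) (real_class k C)"
  using quotient_map_quot_top[OF real_rel_equiv] unfolding realization_def real_class_def .

lemma realization_pointE: assumes "x \<in> topspace (realization k C)"
  obtains p where "p \<in> topspace (pre_real k C)" "x = real_class k C p"
  using assms unfolding topspace_realization real_class_def by (auto elim: quotientE)

lemma pre_real_pointE: assumes "p \<in> topspace (pre_real k C)"
  obtains n u x where "p = (n, u, x)" "n \<in> mdegs k" "u \<in> msimplex n" "x \<in> carr C n"
  using assms by (cases p) auto

lemma real_class_some: assumes "p \<in> topspace (pre_real k C)"
  shows "(SOME q. q \<in> real_class k C p) \<in> topspace (pre_real k C) \<and>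
         equivclp (real_gen k C) p (SOME q. q \<in> real_class k C p)"
proof -
  define q0 where "q0 = (SOME q. q \<in> real_class k C p)"
  have "q0 \<in> real_class k C p" unfolding q0_def using real_class_self[OF assms] by (rule someI)
  then have "(p, q0) \<in> real_rel k C" by (simp add: real_class_def)
  then have "q0 \<in> topspace (pre_real k C) \<and> equivclp (real_gen k C) p q0" by (simp add: real_rel_def)
  then show ?thesis unfolding q0_def .
qed

lemma real_class_descend:
  assumes p: "p \<in> topspace (pre_real k C)"
    and F: "\<And>a b. real_gen k C a b \<Longrightarrow> F a = F b"
  shows "F (SOME q. q \<in> real_class k C p) = F p"
proof -
  have "equivclp (real_gen k C) p (SOME q. q \<in> real_class k C p)" using real_class_some[OF p] by blast
  then have "F p = F (SOME q. q \<in> real_class k C p)"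
    by (induction rule: equivclp_induct) (use F in metis)+
  then show ?thesis by simp
qed

lemma pt_act_topspace: "a \<in> K \<Longrightarrow> p \<in> topspace (pre_real k C) \<Longrightarrow> pt_act k C a p \<in> topspace (pre_real k C)"
  by (cases p) (auto simp: pt_act_triple plist_mdegs mdegsD uperm_msimplex perm_subgroup_permutes[OF K]
      intro: ss_fmap_pair_carr[OF C, of a "cid _", simplified] cid_cmors)

lemma pt_act_real_gen: assumes a: "a \<in> K" and g: "real_gen k C p q"
  shows "real_gen k C (pt_act k C a p) (pt_act k C a q)"
  using g[unfolded real_gen_def]
proof (elim disjE bexE conjE)
  fix f u x assume f: "f \<in> cmors k" and u: "u \<in> msimplex (ctgt f)" and x: "x \<in> carr C (csrc f)"
    and p: "p = (csrc f, cpush f u, x)" and q: "q = (ctgt f, u, fmap C (id, f) x)"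
  have ap: "a permutes {..<k}" using perm_subgroup_permutes[OF K a] .
  have lens: "length (csrc f) = k" "length (ctgt f) = k" using f by (auto simp: cmors_def)
  let ?f = "cact a f" and ?u = "uperm k a u" and ?x = "fmap C (a, cid (csrc f)) x"
  have f': "?f \<in> cmors k" using cact_cmors[OF ap f] .
  have u': "?u \<in> msimplex (ctgt ?f)" using uperm_msimplex[OF u lens(2) ap] by simp
  have x': "?x \<in> carr C (csrc ?f)" using ss_fmap_pair_carr[OF C a cid_cmors[OF csrc_mdegs[OF f]]] x by simp
  have e1: "pt_act k C a p = (csrc ?f, cpush ?f ?u, ?x)"
    using p by (simp add: pt_act_triple uperm_cpush[OF f ap])
  have "fmap C (id, ?f) ?x = fmap C (a, f) x" using ss_fmap_cmor_perm[OF K C a f x] by simp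
  also have "\<dots> = fmap C (a, cid (ctgt f)) (fmap C (id, f) x)" using ss_fmap_perm_cmor[OF K C a f x] .
  finally have e2: "pt_act k C a q = (ctgt ?f, ?u, fmap C (id, ?f) ?x)"
    using q by (simp add: pt_act_triple)
  show ?thesis unfolding real_gen_def using f' u' x' e1 e2 by blast
next
  fix n m u v assume n: "n \<in> mdegs k" and m: "m \<in> mdegs k" and u: "u \<in> msimplex n" and v: "v \<in> msimplex m"
    and p: "p = (n, u, bpt C n)" and q: "q = (m, v, bpt C m)"
  have ap: "a permutes {..<k}" using perm_subgroup_permutes[OF K a] .
  have b: "\<And>n. n \<in> mdegs k \<Longrightarrow> fmap C (a, cid n) (bpt C n) = bpt C (plist a n)"
    using ss_fmap_bpt[OF C] by (metis a cid_cmors gcod_pair gdom_pair cid_simps(1,2) gmorsI)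
  have "pt_act k C a p = (plist a n, uperm k a u, bpt C (plist a n))" using p b[OF n] by (simp add: pt_act_triple)
  moreover have "pt_act k C a q = (plist a m, uperm k a v, bpt C (plist a m))" using q b[OF m] by (simp add: pt_act_triple)
  moreover have "uperm k a u \<in> msimplex (plist a n)" "uperm k a v \<in> msimplex (plist a m)"
    using uperm_msimplex u v n m ap mdegsD by blast+
  ultimately show ?thesis unfolding real_gen_def using n m plist_mdegs by blast
qed

lemma real_act_class: assumes a: "a \<in> K" and p: "p \<in> topspace (pre_real k C)"
  shows "real_act k C a (real_class k C p) = real_class k C (pt_act k C a p)"
  unfolding real_act_def
  by (rule real_class_descend[OF p, of "\<lambda>q. real_class k C (pt_act k C a q)"]) (rule real_class_gen[OF pt_act_real_gen[OF a]])

lemma real_act_topspace: "a \<in> K \<Longrightarrow> x \<in> topspace (realization k C) \<Longrightarrow> real_act k C a x \<in> topspace (realization k C)"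
  by (metis realization_pointE real_act_class real_class_topspace pt_act_topspace)

lemma pt_act_comp: assumes a: "a \<in> K" and b: "b \<in> K" and p: "p \<in> topspace (pre_real k C)"
  shows "pt_act k C a (pt_act k C b p) = pt_act k C (a \<circ> b) p"
proof -
  obtain n u x where e: "p = (n, u, x)" "n \<in> mdegs k" "u \<in> msimplex n" "x \<in> carr C n" using pre_real_pointE[OF p] .
  show ?thesis using e ss_fmap_perm_perm[OF K C a b e(2,4)] plist_comp[OF perm_subgroup_permutes[OF K a] perm_subgroup_permutes[OF K b] mdegsD[OF e(2)]]
      uperm_comp[OF perm_subgroup_permutes[OF K a] perm_subgroup_permutes[OF K b]]
    by (simp add: pt_act_triple)
qed

lemma real_act_comp: assumes a: "a \<in> K" and b: "b \<in> K" and x: "x \<in> topspace (realization k C)"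
  shows "real_act k C a (real_act k C b x) = real_act k C (a \<circ> b) x"
proof -
  obtain p where p: "p \<in> topspace (pre_real k C)" "x = real_class k C p" using realization_pointE[OF x] .
  show ?thesis using p real_act_class[OF a] real_act_class[OF b] pt_act_topspace[OF b] pt_act_comp[OF a b]
      real_act_class[OF perm_subgroup_comp[OF K a b]] by simp
qed

lemma real_class_bpt_eq: "n \<in> mdegs k \<Longrightarrow> m \<in> mdegs k \<Longrightarrow> u \<in> msimplex n \<Longrightarrow> v \<in> msimplex m \<Longrightarrow>
  real_class k C (n, u, bpt C n) = real_class k C (m, v, bpt C m)"
  by (rule real_class_gen) (auto simp: real_gen_def)

lemma real_class_face: "f \<in> cmors k \<Longrightarrow> u \<in> msimplex (ctgt f) \<Longrightarrow> x \<in> carr C (csrc f) \<Longrightarrow>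
  real_class k C (csrc f, cpush f u, x) = real_class k C (ctgt f, u, fmap C (id, f) x)"
  by (rule real_class_gen) (auto simp: real_gen_def)

lemma vertex0_msimplex: "vertex0 k \<in> msimplex (replicate k 0)"
  by (auto simp: msimplex_def vertex0_def)

lemma real_class_bpt: "n \<in> mdegs k \<Longrightarrow> u \<in> msimplex n \<Longrightarrow> real_class k C (n, u, bpt C n) = real_base k C"
  unfolding real_base_def by (rule real_class_bpt_eq) (auto simp: vertex0_msimplex mdegs_def)

lemma real_base_topspace: "real_base k C \<in> topspace (realization k C)"
  unfolding real_base_def by (rule real_class_topspace) (auto simp: vertex0_msimplex mdegs_def ss_bpt_carr[OF C])

lemma real_act_base: assumes a: "a \<in> K" shows "real_act k C a (real_base k C) = real_base k C"
proof -
  let ?z = "replicate k 0"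
  have z: "?z \<in> mdegs k" by (simp add: mdegs_def)
  have "real_act k C a (real_base k C) = real_class k C (pt_act k C a (?z, vertex0 k, bpt C ?z))"
    unfolding real_base_def by (rule real_act_class[OF a]) (simp add: z vertex0_msimplex ss_bpt_carr[OF C z])
  also have "\<dots> = real_base k C"
  proof -
    have b: "fmap C (a, cid ?z) (bpt C ?z) = bpt C (plist a ?z)"
      using ss_fmap_bpt[OF C, of "(a, cid ?z)"] a by (simp add: gmorsI cid_cmors z)
    have "real_class k C (plist a ?z, uperm k a (vertex0 k), bpt C (plist a ?z)) = real_base k C"
      by (rule real_class_bpt) (simp_all add: plist_mdegs z uperm_msimplex vertex0_msimplex perm_subgroup_permutes[OF K a])
    then show ?thesis by (simp add: pt_act_triple b)
  qed
  finally show ?thesis .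
qed

lemma continuous_map_real_class: assumes n: "n \<in> mdegs k" and c: "c \<in> carr C n"
  shows "continuous_map (simplex_top n) (realization k C) (\<lambda>v. real_class k C (n, v, c))"
  using continuous_map_compose[OF continuous_map_simplex_inclusion[OF n c] quotient_imp_continuous_map[OF quotient_map_real_class]]
  by (simp add: o_def)

lemma continuous_map_real_act: assumes a: "a \<in> K"
  shows "continuous_map (realization k C) (realization k C) (real_act k C a)"
proof (rule continuous_compose_quotient_map[OF quotient_map_real_class])
  have "continuous_map (pre_real k C) (realization k C) (\<lambda>p. real_class k C (pt_act k C a p))"
  proof (rule continuous_map_from_pre_real)
    fix n c assume n: "n \<in> mdegs k" and c: "c \<in> carr C n"
    have "fmap C (a, cid n) c \<in> carr C (plist a n)" using ss_fmap_pair_carr[OF C a cid_cmors[OF n]] c by simp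
    then show "continuous_map (simplex_top n) (realization k C) (\<lambda>u. real_class k C (pt_act k C a (n, u, c)))"
      using continuous_map_compose[OF continuous_map_uperm[OF perm_subgroup_permutes[OF K a] mdegsD[OF n]]
          continuous_map_real_class[OF plist_mdegs[OF n]]]
      by (simp add: o_def pt_act_triple)
  qed
  then show "continuous_map (pre_real k C) (realization k C) (real_act k C a \<circ> real_class k C)"
    by (rule continuous_map_eq) (simp add: real_act_class[OF a])
qed

end

context
  fixes k K C D s
  assumes K: "perm_subgroup k K" and C: "is_ss k K C" and D: "is_ss k K D" and s: "nat_trans k K C D s"
begin

lemma real_gen_nat_trans: assumes g: "real_gen k C p q"
  shows "real_gen k D (fst p, fst (snd p), s (fst p) (snd (snd p))) (fst q, fst (snd q), s (fst q) (snd (snd q)))"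
  using g[unfolded real_gen_def]
proof (elim disjE bexE conjE)
  fix f u x assume f: "f \<in> cmors k" and u: "u \<in> msimplex (ctgt f)" and x: "x \<in> carr C (csrc f)"
    and p: "p = (csrc f, cpush f u, x)" and q: "q = (ctgt f, u, fmap C (id, f) x)"
  have "s (ctgt f) (fmap C (id, f) x) = fmap D (id, f) (s (csrc f) x)"
    using nat_trans_fmap[OF s perm_subgroup_id[OF K] f x] by simp
  moreover have sx: "s (csrc f) x \<in> carr D (csrc f)" using nat_trans_carr[OF s csrc_mdegs[OF f] x] .
  have "real_gen k D (csrc f, cpush f u, s (csrc f) x) (ctgt f, u, fmap D (id, f) (s (csrc f) x))"
    unfolding real_gen_def
    by (rule disjI1, rule bexI[of _ f], rule bexI[of _ u], rule bexI[of _ "s (csrc f) x"]) (use f u sx in simp_all)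
  ultimately show ?thesis using p q by simp
next
  fix n m u v assume nm: "n \<in> mdegs k" "m \<in> mdegs k" "u \<in> msimplex n" "v \<in> msimplex m"
    and pq: "p = (n, u, bpt C n)" "q = (m, v, bpt C m)"
  have "real_gen k D (n, u, bpt D n) (m, v, bpt D m)"
    unfolding real_gen_def
    by (rule disjI2, rule bexI[of _ n], rule bexI[of _ m], rule bexI[of _ u], rule bexI[of _ v]) (use nm in simp_all)
  then show ?thesis using pq nat_trans_bpt[OF s] nm by simp
qed

lemma real_map_class: assumes p: "(n, u, x) \<in> topspace (pre_real k C)"
  shows "real_map k C D s (real_class k C (n, u, x)) = real_class k D (n, u, s n x)"
proof -
  have "real_map k C D s (real_class k C (n, u, x)) =
     (\<lambda>p. real_class k D (fst p, fst (snd p), s (fst p) (snd (snd p)))) (SOME q. q \<in> real_class k C (n, u, x))"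
    by (simp add: real_map_def Let_def)
  also have "\<dots> = real_class k D (n, u, s n x)"
  proof -
    have "\<And>a b. real_gen k C a b \<Longrightarrow> real_class k D (fst a, fst (snd a), s (fst a) (snd (snd a))) =
       real_class k D (fst b, fst (snd b), s (fst b) (snd (snd b)))"
      by (rule real_class_gen[OF K D real_gen_nat_trans])
    from real_class_descend[OF K C p, of "\<lambda>p. real_class k D (fst p, fst (snd p), s (fst p) (snd (snd p)))", OF this]
    show ?thesis by simp
  qed
  finally show ?thesis .
qed

lemma real_map_topspace: assumes x: "x \<in> topspace (realization k C)"
  shows "real_map k C D s x \<in> topspace (realization k D)"
proof -
  obtain p where p: "p \<in> topspace (pre_real k C)" "x = real_class k C p" using realization_pointE[OF K C x] .
  then show ?thesis using real_map_class nat_trans_carr[OF s] real_class_topspace[OF K D] by (cases p) auto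
qed

lemma real_map_base: "real_map k C D s (real_base k C) = real_base k D"
  unfolding real_base_def
  by (subst real_map_class) (auto simp: vertex0_msimplex[OF K C] mdegs_def ss_bpt_carr[OF C] nat_trans_bpt[OF s])

lemma real_map_act: assumes a: "a \<in> K" and x: "x \<in> topspace (realization k C)"
  shows "real_map k C D s (real_act k C a x) = real_act k D a (real_map k C D s x)"
proof -
  obtain p where p: "p \<in> topspace (pre_real k C)" "x = real_class k C p" using realization_pointE[OF K C x] .
  obtain n u y where e: "p = (n, u, y)" "n \<in> mdegs k" "u \<in> msimplex n" "y \<in> carr C n"
    using pre_real_pointE[OF K C p(1)] .
  have sy: "s n y \<in> carr D n" using nat_trans_carr[OF s e(2,4)] .
  have "real_map k C D s (real_act k C a x) = real_map k C D s (real_class k C (pt_act k C a p))"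
    using real_act_class[OF K C a p(1)] p by simp
  also have "\<dots> = real_class k D (plist a n, uperm k a u, s (plist a n) (fmap C (a, cid n) y))"
    using e pt_act_topspace[OF K C a p(1)] by (simp add: pt_act_triple real_map_class)
  also have "s (plist a n) (fmap C (a, cid n) y) = fmap D (a, cid n) (s n y)"
    using nat_trans_fmap[OF s a cid_cmors[OF e(2)]] e(4) by simp
  also have "real_class k D (plist a n, uperm k a u, fmap D (a, cid n) (s n y)) =
      real_act k D a (real_class k D (n, u, s n y))"
    using real_act_class[OF K D a, of "(n, u, s n y)"] e sy by (simp add: pt_act_triple)
  also have "real_class k D (n, u, s n y) = real_map k C D s x"
    using p e real_map_class by simp
  finally show ?thesis .
qed

lemma continuous_map_real_map: "continuous_map (realization k C) (realization k D) (real_map k C D s)"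
proof (rule continuous_compose_quotient_map[OF quotient_map_real_class[OF K C]])
  have "continuous_map (pre_real k C) (realization k D) (\<lambda>p. real_class k D (fst p, fst (snd p), s (fst p) (snd (snd p))))"
    by (rule continuous_map_from_pre_real)
      (simp add: continuous_map_real_class[OF K D] nat_trans_carr[OF s])
  then show "continuous_map (pre_real k C) (realization k D) (real_map k C D s \<circ> real_class k C)"
    by (rule continuous_map_eq) (auto simp: real_map_class)
qed

end

section \<open>The smash product\<close>

lemma topspace_smash_pre: "topspace (smash_pre k G A) = G \<times> topspace (realization k A)"
  by (simp add: smash_pre_def)

context
  fixes k H G and A :: "'a ssobj"
  assumes G: "perm_subgroup k G" and H: "perm_subgroup k H" and HG: "H \<subseteq> G" and A: "is_ss k H A"
begin

lemma smash_gen_topspace: "smash_gen k H G A p q \<Longrightarrow> p \<in> topspace (smash_pre k G A) \<and> q \<in> topspace (smash_pre k G A)"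
  unfolding smash_gen_def topspace_smash_pre
  using perm_subgroup_comp[OF G] HG real_act_topspace[OF H A] real_base_topspace[OF H A] by blast

lemma smash_rel_equiv: "equiv (topspace (smash_pre k G A)) (smash_rel k H G A)"
  unfolding equiv_def refl_on_def sym_def trans_def smash_rel_def
  by (auto intro: equivclp_sym equivclp_trans)

lemma smash_class_eq_iff: "p \<in> topspace (smash_pre k G A) \<Longrightarrow> q \<in> topspace (smash_pre k G A) \<Longrightarrow>
   smash_class k H G A p = smash_class k H G A q \<longleftrightarrow> equivclp (smash_gen k H G A) p q"
  unfolding smash_class_def using eq_equiv_class_iff[OF smash_rel_equiv] by (simp add: smash_rel_def)

lemma smash_class_gen: "smash_gen k H G A p q \<Longrightarrow> smash_class k H G A p = smash_class k H G A q"
  using smash_gen_topspace smash_class_eq_iff by (meson equivclp_into_equivclp equivclp_refl)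

lemma smash_class_shift: "g \<in> G \<Longrightarrow> h \<in> H \<Longrightarrow> x \<in> topspace (realization k A) \<Longrightarrow>
  smash_class k H G A (g \<circ> h, x) = smash_class k H G A (g, real_act k A h x)"
  by (rule smash_class_gen) (unfold smash_gen_def, blast)

lemma smash_class_base: "g \<in> G \<Longrightarrow> g' \<in> G \<Longrightarrow>
  smash_class k H G A (g, real_base k A) = smash_class k H G A (g', real_base k A)"
  by (rule smash_class_gen) (unfold smash_gen_def, blast)

lemma smash_class_self: "p \<in> topspace (smash_pre k G A) \<Longrightarrow> p \<in> smash_class k H G A p"
  unfolding smash_class_def using equiv_class_self[OF smash_rel_equiv] by blast

lemma topspace_smash: "topspace (smash k H G A) = topspace (smash_pre k G A) // smash_rel k H G A"
  unfolding smash_def using topspace_quot_top[OF smash_rel_equiv] .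

lemma quotient_map_smash_class: "quotient_map (smash_pre k G A) (smash k H G A) (smash_class k H G A)"
  using quotient_map_quot_top[OF smash_rel_equiv] unfolding smash_def smash_class_def .

lemma smash_pointE: assumes "y \<in> topspace (smash k H G A)"
  obtains p where "p \<in> topspace (smash_pre k G A)" "y = smash_class k H G A p"
  using assms unfolding topspace_smash smash_class_def by (auto elim: quotientE)

lemma smash_descend:
  assumes p: "p \<in> topspace (smash_pre k G A)"
    and F: "\<And>a b. smash_gen k H G A a b \<Longrightarrow> F a = F b"
  shows "F (SOME q. q \<in> smash_class k H G A p) = F p"
proof -
  define q0 where "q0 = (SOME q. q \<in> smash_class k H G A p)"
  have "q0 \<in> smash_class k H G A p" unfolding q0_def using smash_class_self[OF p] by (rule someI)
  then have "equivclp (smash_gen k H G A) p q0" by (simp add: smash_class_def smash_rel_def)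
  then have "F p = F q0"
    by (induction rule: equivclp_induct) (use F in metis)+
  then show ?thesis unfolding q0_def by simp
qed

lemma smash_act_class: assumes al: "al \<in> G" and p: "p \<in> topspace (smash_pre k G A)"
  shows "smash_act k H G A al (smash_class k H G A p) = smash_class k H G A (al \<circ> fst p, snd p)"
proof -
  have "smash_class k H G A (al \<circ> fst a, snd a) = smash_class k H G A (al \<circ> fst b, snd b)"
    if "smash_gen k H G A a b" for a b
    using that unfolding smash_gen_def
  proof (elim disjE bexE conjE)
    fix g g' assume "g \<in> G" "g' \<in> G" "a = (g, real_base k A)" "b = (g', real_base k A)"
    then show ?thesis using smash_class_base[OF perm_subgroup_comp[OF G al] perm_subgroup_comp[OF G al], of g g'] by simp
  next
    fix g h x assume "g \<in> G" "h \<in> H" "x \<in> topspace (realization k A)" "a = (g \<circ> h, x)" "b = (g, real_act k A h x)"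
    then show ?thesis using smash_class_shift[OF perm_subgroup_comp[OF G al]] by (simp add: o_assoc)
  qed
  from smash_descend[OF p, of "\<lambda>q. smash_class k H G A (al \<circ> fst q, snd q)", OF this]
  show ?thesis by (simp add: smash_act_def Let_def)
qed

end

section \<open>An explicit model of the induced object\<close>

text \<open>
  An element $g \otimes a$ of $(I_H^G A)_d$, with $a \in A_n$, $g \in G$ and $g n = d$, is encoded as
  $((g, \mathrm{id}_n), a)$, so that the model has the same carrier type as the object $B$ of the
  statement. Representatives are identified modulo $g h \otimes a = g \otimes h_* a$ for $h \in H$, and
  all basepoints are identified.
\<close>

definition ind_rep :: "nat \<Rightarrow> perm set \<Rightarrow> 'a ssobj \<Rightarrow> mdeg \<Rightarrow> gmor \<times> 'a \<Rightarrow> bool" where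
  "ind_rep k G A d p \<longleftrightarrow> (\<exists>g n a. p = ((g, cid n), a) \<and> g \<in> G \<and> n \<in> mdegs k \<and> a \<in> carr A n \<and> plist g n = d)"

definition ind_cond :: "nat \<Rightarrow> perm set \<Rightarrow> 'a ssobj \<Rightarrow> gmor \<times> 'a \<Rightarrow> gmor \<times> 'a \<Rightarrow> bool" where
  "ind_cond k H A p q \<longleftrightarrow> (snd p = bpt A (csrc (snd (fst p))) \<and> snd q = bpt A (csrc (snd (fst q)))) \<or>
     (inv (fst (fst p)) \<circ> fst (fst q) \<in> H \<and>
      snd p = fmap A (inv (fst (fst p)) \<circ> fst (fst q), cid (csrc (snd (fst q)))) (snd q))"

definition ind_rel :: "nat \<Rightarrow> perm set \<Rightarrow> perm set \<Rightarrow> 'a ssobj \<Rightarrow> mdeg \<Rightarrow> ((gmor \<times> 'a) \<times> (gmor \<times> 'a)) set" where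
  "ind_rel k H G A d = {(p, q). ind_rep k G A d p \<and> ind_rep k G A d q \<and> ind_cond k H A p q}"

definition ind_mapp :: "'a ssobj \<Rightarrow> gmor \<Rightarrow> gmor \<times> 'a \<Rightarrow> gmor \<times> 'a" where
  "ind_mapp A m p = ((fst m \<circ> fst (fst p), cid (plist (inv (fst (fst p))) (ctgt (snd m)))),
      fmap A (id, cact (inv (fst (fst p))) (snd m)) (snd p))"

definition ind_obj :: "nat \<Rightarrow> perm set \<Rightarrow> perm set \<Rightarrow> 'a ssobj \<Rightarrow> (gmor \<times> 'a) set ssobj" where
  "ind_obj k H G A = \<lparr>carr = \<lambda>d. {p. ind_rep k G A d p} // ind_rel k H G A d,
     bpt = \<lambda>d. ind_rel k H G A d `` {((id, cid d), bpt A d)},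
     fmap = \<lambda>m c. ind_rel k H G A (gcod m) `` {ind_mapp A m (SOME p. p \<in> c)}\<rparr>"

definition ind_unit :: "nat \<Rightarrow> perm set \<Rightarrow> perm set \<Rightarrow> 'a ssobj \<Rightarrow> mdeg \<Rightarrow> 'a \<Rightarrow> (gmor \<times> 'a) set" where
  "ind_unit k H G A n a = ind_rel k H G A n `` {((id, cid n), a)}"

lemma ind_rep_pair[simp]: "ind_rep k G A d ((g, f), a) \<longleftrightarrow>
   g \<in> G \<and> f = cid (csrc f) \<and> csrc f \<in> mdegs k \<and> a \<in> carr A (csrc f) \<and> plist g (csrc f) = d"
  unfolding ind_rep_def by (auto simp: cid_inj)

lemma ind_rep_cid[simp]: "ind_rep k G A d ((g, cid n), a) \<longleftrightarrow> g \<in> G \<and> n \<in> mdegs k \<and> a \<in> carr A n \<and> plist g n = d"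
  by simp

lemma ind_repE: assumes "ind_rep k G A d p"
  obtains g n a where "p = ((g, cid n), a)" "g \<in> G" "n \<in> mdegs k" "a \<in> carr A n" "plist g n = d"
  using assms unfolding ind_rep_def by blast

lemma ind_cond_cid[simp]: "ind_cond k H A ((g, cid n), a) ((g', cid n'), a') \<longleftrightarrow>
   (a = bpt A n \<and> a' = bpt A n') \<or> (inv g \<circ> g' \<in> H \<and> a = fmap A (inv g \<circ> g', cid n') a')"
  by (simp add: ind_cond_def)

lemma ind_mapp_cid[simp]: "ind_mapp A (al, f) ((g, cid n), a) =
   ((al \<circ> g, cid (plist (inv g) (ctgt f))), fmap A (id, cact (inv g) f) a)"
  by (simp add: ind_mapp_def)

lemma ind_rel_iff: "(((g, cid n), a), ((g', cid n'), a')) \<in> ind_rel k H G A d \<longleftrightarrow>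
   ind_rep k G A d ((g, cid n), a) \<and> ind_rep k G A d ((g', cid n'), a') \<and>
   ((a = bpt A n \<and> a' = bpt A n') \<or> (inv g \<circ> g' \<in> H \<and> a = fmap A (inv g \<circ> g', cid n') a'))"
  unfolding ind_rel_def by (simp only: ind_cond_cid mem_Collect_eq prod.case ind_rep_cid)

lemma ind_obj_simps[simp]: "carr (ind_obj k H G A) d = {p. ind_rep k G A d p} // ind_rel k H G A d"
  "bpt (ind_obj k H G A) d = ind_rel k H G A d `` {((id, cid d), bpt A d)}"
  "fmap (ind_obj k H G A) m c = ind_rel k H G A (gcod m) `` {ind_mapp A m (SOME p. p \<in> c)}"
  by (simp_all add: ind_obj_def)

definition ind_eval :: "'b ssobj \<Rightarrow> (mdeg \<Rightarrow> 'a \<Rightarrow> 'b) \<Rightarrow> gmor \<times> 'a \<Rightarrow> 'b" where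
  "ind_eval B eta p = fmap B (fst (fst p), cid (csrc (snd (fst p)))) (eta (csrc (snd (fst p))) (snd p))"

lemma ind_eval_cid[simp]: "ind_eval B eta ((g, cid n), a) = fmap B (g, cid n) (eta n a)"
  by (simp add: ind_eval_def)

definition ind_eval_class :: "'b ssobj \<Rightarrow> (mdeg \<Rightarrow> 'a \<Rightarrow> 'b) \<Rightarrow> mdeg \<Rightarrow> (gmor \<times> 'a) set \<Rightarrow> 'b" where
  "ind_eval_class B eta d c = ind_eval B eta (SOME p. p \<in> c)"

context
  fixes k H G and A :: "'a ssobj"
  assumes G: "perm_subgroup k G" and H: "perm_subgroup k H" and HG: "H \<subseteq> G" and A: "is_ss k H A"
begin

lemma G_permutes: "g \<in> G \<Longrightarrow> g permutes {..<k}" using perm_subgroup_permutes[OF G] .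

lemma plist_inv_comp_eq: assumes "g \<in> G" "g' \<in> G" "n \<in> mdegs k" "n' \<in> mdegs k" "plist g n = plist g' n'"
  shows "plist (inv g \<circ> g') n' = n"
proof -
  have "plist (inv g \<circ> g') n' = plist (inv g) (plist g' n')"
    using plist_comp[OF permutes_inv[OF G_permutes[OF assms(1)]] G_permutes[OF assms(2)] mdegsD[OF assms(4)]] by simp
  also have "\<dots> = n" using assms(5) plist_inv_cancel[OF G_permutes[OF assms(1)] mdegsD[OF assms(3)]] by simp
  finally show ?thesis .
qed

lemma ind_relE:
  assumes "(p, q) \<in> ind_rel k H G A d"
  obtains g n a g' n' a' where "p = ((g, cid n), a)" "q = ((g', cid n'), a')"
    "g \<in> G" "n \<in> mdegs k" "a \<in> carr A n" "plist g n = d"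
    "g' \<in> G" "n' \<in> mdegs k" "a' \<in> carr A n'" "plist g' n' = d"
    "plist (inv g \<circ> g') n' = n"
    "(a = bpt A n \<and> a' = bpt A n') \<or> (inv g \<circ> g' \<in> H \<and> a = fmap A (inv g \<circ> g', cid n') a')"
proof -
  obtain g n a g' n' a' where p: "p = ((g, cid n), a)" "g \<in> G" "n \<in> mdegs k" "a \<in> carr A n" "plist g n = d"
      and q: "q = ((g', cid n'), a')" "g' \<in> G" "n' \<in> mdegs k" "a' \<in> carr A n'" "plist g' n' = d"
    using assms by (auto simp: ind_rel_def elim!: ind_repE)
  show ?thesis
    using that[OF p(1) q(1) p(2-5) q(2-5) plist_inv_comp_eq[OF p(2) q(2) p(3) q(3)]] assms p q
    by (simp add: ind_rel_iff)
qed

lemma ind_rel_refl: "ind_rep k G A d p \<Longrightarrow> (p, p) \<in> ind_rel k H G A d"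
  by (auto simp: ind_rel_iff ss_fmap_id[OF A] permutes_inv_o(2)[OF G_permutes] perm_subgroup_id[OF H]
      elim!: ind_repE)

lemma ind_rel_sym: assumes "(p, q) \<in> ind_rel k H G A d" shows "(q, p) \<in> ind_rel k H G A d"
  using assms
proof (rule ind_relE)
  fix g n a g' n' a'
  assume pq: "p = ((g, cid n), a)" "q = ((g', cid n'), a')"
    and p: "g \<in> G" "n \<in> mdegs k" "a \<in> carr A n" "plist g n = d"
    and q: "g' \<in> G" "n' \<in> mdegs k" "a' \<in> carr A n'" "plist g' n' = d"
    and deg: "plist (inv g \<circ> g') n' = n"
    and c: "(a = bpt A n \<and> a' = bpt A n') \<or> (inv g \<circ> g' \<in> H \<and> a = fmap A (inv g \<circ> g', cid n') a')"
  have inv_h: "inv (inv g \<circ> g') = inv g' \<circ> g"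
    using inv_comp_permutes[OF permutes_inv[OF G_permutes[OF p(1)]] G_permutes[OF q(1)]]
      permutes_inv_inv[OF G_permutes[OF p(1)]] by simp
  have "(a' = bpt A n' \<and> a = bpt A n) \<or> (inv g' \<circ> g \<in> H \<and> a' = fmap A (inv g' \<circ> g, cid n) a)"
    using c
  proof
    assume h: "inv g \<circ> g' \<in> H \<and> a = fmap A (inv g \<circ> g', cid n') a'"
    then have "a' = fmap A (inv (inv g \<circ> g'), cid n) a"
      using ss_fmap_perm_inv[OF H A conjunct1[OF h] q(2,3)] deg by simp
    then show ?thesis using h inv_h perm_subgroup_inv[OF H, of "inv g \<circ> g'"] by auto
  qed auto
  then show ?thesis using pq p q by (simp add: ind_rel_iff)
qed

lemma ind_rel_trans:
  assumes "(p, q) \<in> ind_rel k H G A d" and "(q, r) \<in> ind_rel k H G A d"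
  shows "(p, r) \<in> ind_rel k H G A d"
proof -
  obtain g n a g' n' a' where pq: "p = ((g, cid n), a)" "q = ((g', cid n'), a')"
      and p: "g \<in> G" "n \<in> mdegs k" "a \<in> carr A n" "plist g n = d"
      and q: "g' \<in> G" "n' \<in> mdegs k" "a' \<in> carr A n'"
      and d1: "plist (inv g \<circ> g') n' = n"
      and c1: "(a = bpt A n \<and> a' = bpt A n') \<or> (inv g \<circ> g' \<in> H \<and> a = fmap A (inv g \<circ> g', cid n') a')"
    using assms(1) by (rule ind_relE) blast
  obtain g'' n'' a'' where r: "r = ((g'', cid n''), a'')" "g'' \<in> G" "n'' \<in> mdegs k" "a'' \<in> carr A n''" "plist g'' n'' = d"
      and d2: "plist (inv g' \<circ> g'') n'' = n'"
      and c2: "(a' = bpt A n' \<and> a'' = bpt A n'') \<or> (inv g' \<circ> g'' \<in> H \<and> a' = fmap A (inv g' \<circ> g'', cid n'') a'')"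
    using assms(2) by (rule ind_relE) (use pq(2) in \<open>auto simp: cid_inj\<close>)
  have "(a = bpt A n \<and> a'' = bpt A n'') \<or> (inv g \<circ> g'' \<in> H \<and> a = fmap A (inv g \<circ> g'', cid n'') a'')"
  proof (cases "a' = bpt A n'")
    case True
    then have "a = bpt A n" using c1 d1 ss_fmap_perm_bpt[OF A _ q(2)] by auto
    moreover have "a'' = bpt A n''"
    proof (cases "a'' = bpt A n''")
      case False
      then have "inv g' \<circ> g'' \<in> H" "fmap A (inv g' \<circ> g'', cid n'') a'' = bpt A (plist (inv g' \<circ> g'') n'')"
        using c2 True d2 by auto
      then show ?thesis using ss_fmap_perm_eq_bpt_iff[OF H A _ r(3,4)] by blast
    qed
    ultimately show ?thesis by simp
  next
    case False
    then have h1: "inv g \<circ> g' \<in> H" "a = fmap A (inv g \<circ> g', cid n') a'"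
      and h2: "inv g' \<circ> g'' \<in> H" "a' = fmap A (inv g' \<circ> g'', cid n'') a''" using c1 c2 by auto
    have "(inv g \<circ> g') \<circ> (inv g' \<circ> g'') = inv g \<circ> g''"
      using permutes_inv_o(1)[OF G_permutes[OF q(1)]] by (simp add: o_assoc) (metis comp_id o_assoc)
    then show ?thesis
      using h1 h2 ss_fmap_perm_perm[OF H A h1(1) h2(1) r(3,4)] d2 perm_subgroup_comp[OF H h1(1) h2(1)] by simp
  qed
  then show ?thesis using pq p r by (simp add: ind_rel_iff)
qed

lemma ind_rel_equiv: "equiv {p. ind_rep k G A d p} (ind_rel k H G A d)"
proof (rule equivI)
  show "ind_rel k H G A d \<subseteq> {p. ind_rep k G A d p} \<times> {p. ind_rep k G A d p}"
    by (auto simp: ind_rel_def)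
  show "refl_on {p. ind_rep k G A d p} (ind_rel k H G A d)"
    by (rule refl_onI) (simp add: ind_rel_refl)
qed (auto intro: symI ind_rel_sym transI ind_rel_trans)

lemma ind_mapp_rep: assumes m: "(al, f) \<in> gmors k G" and p: "ind_rep k G A (csrc f) p"
  shows "ind_rep k G A (plist al (ctgt f)) (ind_mapp A (al, f) p)"
proof -
  obtain g n a where pe: "p = ((g, cid n), a)" "g \<in> G" "n \<in> mdegs k" "a \<in> carr A n" "plist g n = csrc f"
    using p by (auto elim: ind_repE)
  have al: "al \<in> G" and f: "f \<in> cmors k" using m by (auto simp: gmors_def)
  have gp: "g permutes {..<k}" using G_permutes[OF pe(2)] .
  have lf: "length (csrc f) = k" "length (ctgt f) = k" using f by (auto simp: cmors_def)
  have src: "csrc (cact (inv g) f) = n" using pe(5) plist_inv_cancel[OF gp mdegsD[OF pe(3)]] by simp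
  have "fmap A (id, cact (inv g) f) a \<in> carr A (plist id (ctgt (cact (inv g) f)))"
    by (rule ss_fmap_pair_carr[OF A perm_subgroup_id[OF H] cact_cmors[OF permutes_inv[OF gp] f]]) (use src pe in simp)
  moreover have "plist (al \<circ> g) (plist (inv g) (ctgt f)) = plist al (ctgt f)"
    using plist_comp[OF G_permutes[OF al] gp, of "plist (inv g) (ctgt f)"] plist_cancel_inv[OF gp lf(2)] lf by simp
  ultimately show ?thesis using pe perm_subgroup_comp[OF G al pe(2)] lf by (simp add: mdegsI)
qed

lemma ind_mapp_rel: assumes m: "(al, f) \<in> gmors k G" and pq: "(p, q) \<in> ind_rel k H G A (csrc f)"
  shows "(ind_mapp A (al, f) p, ind_mapp A (al, f) q) \<in> ind_rel k H G A (plist al (ctgt f))"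
  using pq
proof (rule ind_relE)
  fix g n a g' n' a'
  assume pq': "p = ((g, cid n), a)" "q = ((g', cid n'), a')"
    and p: "g \<in> G" "n \<in> mdegs k" "a \<in> carr A n" "plist g n = csrc f"
    and q: "g' \<in> G" "n' \<in> mdegs k" "a' \<in> carr A n'" "plist g' n' = csrc f"
    and c: "(a = bpt A n \<and> a' = bpt A n') \<or> (inv g \<circ> g' \<in> H \<and> a = fmap A (inv g \<circ> g', cid n') a')"
  have f: "f \<in> cmors k" and alp: "al permutes {..<k}" using m G_permutes by (auto simp: gmors_def)
  have gp: "g permutes {..<k}" and gp': "g' permutes {..<k}" using G_permutes p(1) q(1) by auto
  let ?f = "cact (inv g) f" and ?f' = "cact (inv g') f"
  have f': "?f' \<in> cmors k" using cact_cmors[OF permutes_inv[OF gp'] f] .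
  have src: "csrc ?f = n" "csrc ?f' = n'"
    using p(4) q(4) plist_inv_cancel[OF gp mdegsD[OF p(2)]] plist_inv_cancel[OF gp' mdegsD[OF q(2)]] by simp_all
  have "(fmap A (id, ?f) a = bpt A (ctgt ?f) \<and> fmap A (id, ?f') a' = bpt A (ctgt ?f')) \<or>
        (inv g \<circ> g' \<in> H \<and> fmap A (id, ?f) a = fmap A (inv g \<circ> g', cid (ctgt ?f')) (fmap A (id, ?f') a'))"
    using c
  proof
    assume "a = bpt A n \<and> a' = bpt A n'"
    then show ?thesis
      using ss_fmap_bpt[OF A, of "(id, ?f)"] ss_fmap_bpt[OF A, of "(id, ?f')"] src f f' gp
      by (simp add: gmorsI perm_subgroup_id[OF H] cact_cmors permutes_inv)
  next
    assume h: "inv g \<circ> g' \<in> H \<and> a = fmap A (inv g \<circ> g', cid n') a'"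
    have "cact (inv g \<circ> g') ?f' = ?f"
      using cact_comp[OF perm_subgroup_permutes[OF H] permutes_inv[OF gp'] f] h
        permutes_inv_o(1)[OF gp'] by (simp add: o_assoc) (metis comp_id o_assoc)
    then show ?thesis
      using h ss_fmap_cact_perm[OF H A conjunct1[OF h] f'] q(3) src by simp
  qed
  moreover have "inv (al \<circ> g) \<circ> (al \<circ> g') = inv g \<circ> g'"
    using inv_comp_permutes[OF alp gp] permutes_inv_o(2)[OF alp] by (simp add: o_assoc) (metis comp_id o_assoc)
  moreover have "ind_rep k G A (plist al (ctgt f)) (ind_mapp A (al, f) p)"
    "ind_rep k G A (plist al (ctgt f)) (ind_mapp A (al, f) q)"
    using ind_mapp_rep[OF m] pq by (auto simp: ind_rel_def)
  ultimately show ?thesis unfolding pq' ind_mapp_cid ind_rel_iff by simp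
qed

lemma ind_obj_fmap_class: assumes m: "(al, f) \<in> gmors k G" and p: "ind_rep k G A (csrc f) p"
  shows "fmap (ind_obj k H G A) (al, f) (ind_rel k H G A (csrc f) `` {p}) =
    ind_rel k H G A (plist al (ctgt f)) `` {ind_mapp A (al, f) p}"
proof -
  define q where "q = (SOME q. q \<in> ind_rel k H G A (csrc f) `` {p})"
  have "p \<in> ind_rel k H G A (csrc f) `` {p}" using equiv_class_self[OF ind_rel_equiv] p by simp
  then have "q \<in> ind_rel k H G A (csrc f) `` {p}" unfolding q_def by (rule someI)
  then have "(ind_mapp A (al, f) p, ind_mapp A (al, f) q) \<in> ind_rel k H G A (plist al (ctgt f))"
    by (intro ind_mapp_rel[OF m]) simp
  then show ?thesis unfolding q_def by (simp add: equiv_class_eq[OF ind_rel_equiv])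
qed

lemma ind_objE:
  assumes "x \<in> carr (ind_obj k H G A) d"
  obtains g n a where "x = ind_rel k H G A d `` {((g, cid n), a)}"
    "g \<in> G" "n \<in> mdegs k" "a \<in> carr A n" "plist g n = d"
  using assms by (auto elim!: quotientE ind_repE)

lemma ind_mapp_gcomp: assumes m1: "(al, f) \<in> gmors k G" and m2: "(be, f2) \<in> gmors k G"
    and d: "csrc f = plist be (ctgt f2)" and p: "ind_rep k G A (csrc f2) p"
  shows "ind_mapp A (al, f) (ind_mapp A (be, f2) p) = ind_mapp A (gcomp (al, f) (be, f2)) p"
proof -
  obtain g n a where pe: "p = ((g, cid n), a)" "g \<in> G" "n \<in> mdegs k" "a \<in> carr A n" "plist g n = csrc f2"
    using p by (auto elim: ind_repE)
  have f: "f \<in> cmors k" and f2: "f2 \<in> cmors k" using m1 m2 by (auto simp: gmors_def)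
  have gp: "g permutes {..<k}" and bp: "be permutes {..<k}" using G_permutes pe(2) m2 by (auto simp: gmors_def)
  have lf: "length (ctgt f) = k" "length (ctgt f2) = k" "length (csrc f2) = k" using f f2 by (auto simp: cmors_def)
  have ib: "inv (be \<circ> g) = inv g \<circ> inv be" using inv_comp_permutes[OF bp gp] .
  let ?c1 = "cact (inv (be \<circ> g)) f" and ?c2 = "cact (inv g) f2"
  have c1: "?c1 \<in> cmors k" using cact_cmors[OF permutes_inv[OF permutes_compose[OF gp bp]] f] .
  have c2: "?c2 \<in> cmors k" using cact_cmors[OF permutes_inv[OF gp] f2] .
  have e1: "cact (inv g) (ccomp (cact (inv be) f) f2) = ccomp ?c1 ?c2"
    using cact_ccomp[OF permutes_inv[OF gp] cact_cmors[OF permutes_inv[OF bp] f] f2]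
      cact_comp[OF permutes_inv[OF gp] permutes_inv[OF bp] f] ib by simp
  have deg: "plist (inv g) (plist (inv be) (ctgt f)) = plist (inv (be \<circ> g)) (ctgt f)"
    using plist_comp[OF permutes_inv[OF gp] permutes_inv[OF bp] lf(1)] ib by simp
  have src: "csrc ?c1 = ctgt ?c2"
    using d ib plist_comp[OF permutes_inv[OF gp] permutes_inv[OF bp], of "plist be (ctgt f2)"]
      plist_inv_cancel[OF bp lf(2)] lf by simp
  have asrc: "a \<in> carr A (csrc ?c2)" using pe plist_inv_cancel[OF gp mdegsD[OF pe(3)]] by simp
  have "fmap A (id, ccomp ?c1 ?c2) a = fmap A (id, ?c1) (fmap A (id, ?c2) a)"
    using ss_fmap_comp[OF A, of "(id, ?c1)" "(id, ?c2)" a] src asrc c1 c2 perm_subgroup_id[OF H]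
    by (simp add: gmorsI gcomp_pair)
  then show ?thesis using pe(1) e1 deg by (simp add: gcomp_pair o_assoc)
qed

lemma ind_obj_fmap_carr:
  assumes m: "m \<in> gmors k G" and x: "x \<in> carr (ind_obj k H G A) (gdom m)"
  shows "fmap (ind_obj k H G A) m x \<in> carr (ind_obj k H G A) (gcod m)"
proof -
  obtain al f where mf: "m = (al, f)" by (cases m)
  obtain p where p: "ind_rep k G A (csrc f) p" "x = ind_rel k H G A (csrc f) `` {p}"
    using x mf by (auto elim: quotientE)
  show ?thesis
    using ind_obj_fmap_class[OF m[unfolded mf] p(1)] p(2) ind_mapp_rep[OF m[unfolded mf] p(1)] mf
    by (simp del: ind_obj_simps(3)) (simp add: quotientI)
qed

lemma ind_obj_fmap_bpt:
  assumes m: "m \<in> gmors k G"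
  shows "fmap (ind_obj k H G A) m (bpt (ind_obj k H G A) (gdom m)) = bpt (ind_obj k H G A) (gcod m)"
proof -
  obtain al f where mf: "m = (al, f)" by (cases m)
  have al: "al \<in> G" and f: "f \<in> cmors k" using m mf by (auto simp: gmors_def)
  let ?d = "plist al (ctgt f)"
  have v: "ind_rep k G A (csrc f) ((id, cid (csrc f)), bpt A (csrc f))"
    using perm_subgroup_id[OF G] ss_bpt_carr[OF A csrc_mdegs[OF f]] csrc_mdegs[OF f] by simp
  have "fmap (ind_obj k H G A) m (bpt (ind_obj k H G A) (gdom m)) =
     ind_rel k H G A ?d `` {((al, cid (ctgt f)), fmap A (id, f) (bpt A (csrc f)))}"
    using ind_obj_fmap_class[OF m[unfolded mf] v] mf by (simp del: ind_obj_simps(3) add: ind_obj_simps(2))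
  also have "fmap A (id, f) (bpt A (csrc f)) = bpt A (ctgt f)"
    using ss_fmap_bpt[OF A, of "(id, f)"] f by (simp add: gmorsI perm_subgroup_id[OF H])
  also have "ind_rel k H G A ?d `` {((al, cid (ctgt f)), bpt A (ctgt f))} =
      ind_rel k H G A ?d `` {((id, cid ?d), bpt A ?d)}"
    by (rule equiv_class_eq[OF ind_rel_equiv])
      (use al perm_subgroup_id[OF G] ss_bpt_carr[OF A] ctgt_mdegs[OF f] plist_mdegs[OF ctgt_mdegs[OF f]]
        in \<open>simp add: ind_rel_iff\<close>)
  finally show ?thesis using mf by simp
qed

lemma ind_obj_fmap_id:
  assumes n: "n \<in> mdegs k" and x: "x \<in> carr (ind_obj k H G A) n"
  shows "fmap (ind_obj k H G A) (gid n) x = x"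
proof -
  obtain g n0 a where e: "x = ind_rel k H G A n `` {((g, cid n0), a)}"
    "g \<in> G" "n0 \<in> mdegs k" "a \<in> carr A n0" "plist g n0 = n"
    using x by (rule ind_objE)
  have gp: "g permutes {..<k}" using G_permutes[OF e(2)] .
  have "plist (inv g) n = n0" using e(5) plist_inv_cancel[OF gp mdegsD[OF e(3)]] by simp
  then have "ind_mapp A (id, cid n) ((g, cid n0), a) = ((g, cid n0), a)"
    using cact_cid[OF permutes_inv[OF gp], of n] mdegsD[OF n] ss_fmap_id[OF A e(3,4)] by simp
  then show ?thesis
    using ind_obj_fmap_class[of id "cid n" "((g, cid n0), a)"] e gid_eq perm_subgroup_id[OF G] cid_cmors[OF n]
    by (simp del: ind_obj_simps(3) add: gmorsI)
qed

lemma ind_obj_fmap_comp: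
  assumes m1: "m1 \<in> gmors k G" and m2: "m2 \<in> gmors k G" and d: "gdom m1 = gcod m2"
    and x: "x \<in> carr (ind_obj k H G A) (gdom m2)"
  shows "fmap (ind_obj k H G A) (gcomp m1 m2) x = fmap (ind_obj k H G A) m1 (fmap (ind_obj k H G A) m2 x)"
proof -
  obtain al f be f2 where mf: "m1 = (al, f)" "m2 = (be, f2)" by (cases m1, cases m2)
  have al: "al \<in> G" and f: "f \<in> cmors k" and bp: "be permutes {..<k}"
    using m1 m2 mf G_permutes by (auto simp: gmors_def)
  have dd: "csrc f = plist be (ctgt f2)" using d mf by simp
  let ?d = "plist al (ctgt f)"
  have gc: "gcod (gcomp m1 m2) = ?d"
    using plist_comp[OF G_permutes[OF al] bp, of "plist (inv be) (ctgt f)"] plist_cancel_inv[OF bp, of "ctgt f"] f mf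
    by (simp add: gcomp_pair cmors_def)
  obtain p where p: "ind_rep k G A (csrc f2) p" "x = ind_rel k H G A (csrc f2) `` {p}"
    using x mf by (auto elim: quotientE)
  define q where "q = (SOME q. q \<in> x)"
  have "p \<in> x" using equiv_class_self[OF ind_rel_equiv] p by simp
  then have "q \<in> x" unfolding q_def by (rule someI)
  then have pq: "(p, q) \<in> ind_rel k H G A (csrc f2)" using p by simp
  have "(ind_mapp A (al, f) (ind_mapp A (be, f2) p), ind_mapp A (al, f) (ind_mapp A (be, f2) q)) \<in> ind_rel k H G A ?d"
    using ind_mapp_rel[OF m1[unfolded mf(1)]] ind_mapp_rel[OF m2[unfolded mf(2)] pq] dd by simp
  moreover have "ind_mapp A (al, f) (ind_mapp A (be, f2) q) = ind_mapp A (gcomp m1 m2) q"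
    using ind_mapp_gcomp[OF m1[unfolded mf(1)] m2[unfolded mf(2)] dd] pq mf by (simp add: ind_rel_def)
  moreover have "fmap (ind_obj k H G A) m1 (fmap (ind_obj k H G A) m2 x) =
     ind_rel k H G A ?d `` {ind_mapp A (al, f) (ind_mapp A (be, f2) p)}"
    using ind_obj_fmap_class[OF m2[unfolded mf(2)] p(1)] p(2) mf dd
      ind_obj_fmap_class[OF m1[unfolded mf(1)], of "ind_mapp A (be, f2) p"] ind_mapp_rep[OF m2[unfolded mf(2)] p(1)]
    by (simp del: ind_obj_simps(3))
  ultimately show ?thesis using gc equiv_class_eq[OF ind_rel_equiv] by (simp add: q_def)
qed

lemma is_ss_ind_obj: "is_ss k G (ind_obj k H G A)"
  unfolding is_ss_def
  using ind_obj_fmap_carr ind_obj_fmap_bpt ind_obj_fmap_id ind_obj_fmap_comp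
    perm_subgroup_id[OF G] ss_bpt_carr[OF A] by (auto simp del: ind_obj_simps(3) intro: quotientI)

lemma nat_trans_ind_unit: "nat_trans k H A (ind_obj k H G A) (ind_unit k H G A)"
  unfolding nat_trans_def
proof (intro conjI ballI)
  fix n assume n: "n \<in> mdegs k"
  show "ind_unit k H G A n ` carr A n \<subseteq> carr (ind_obj k H G A) n"
    using n perm_subgroup_id[OF G] by (auto simp: ind_unit_def intro!: quotientI)
  show "ind_unit k H G A n (bpt A n) = bpt (ind_obj k H G A) n" by (simp add: ind_unit_def)
next
  fix m x assume m: "m \<in> gmors k H" and x: "x \<in> carr A (gdom m)"
  obtain h f where mf: "m = (h, f)" by (cases m) blast
  have h: "h \<in> H" and f: "f \<in> cmors k" using m mf by (auto simp: gmors_def)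
  have hG: "h \<in> G" using h HG by auto
  have mG: "(h, f) \<in> gmors k G" using hG f by (simp add: gmorsI)
  have xv: "ind_rep k G A (csrc f) ((id, cid (csrc f)), x)"
    using x mf perm_subgroup_id[OF G] csrc_mdegs[OF f] by simp
  have "fmap (ind_obj k H G A) m (ind_unit k H G A (gdom m) x) =
      ind_rel k H G A (plist h (ctgt f)) `` {((h, cid (ctgt f)), fmap A (id, f) x)}"
    using ind_obj_fmap_class[OF mG xv] mf by (simp add: ind_unit_def del: ind_obj_simps(3))
  also have "\<dots> = ind_rel k H G A (plist h (ctgt f)) `` {((id, cid (plist h (ctgt f))), fmap A (h, f) x)}"
  proof (rule sym, rule equiv_class_eq[OF ind_rel_equiv])
    have ax: "fmap A (id, f) x \<in> carr A (ctgt f)" using ss_fmap_pair_carr[OF A perm_subgroup_id[OF H] f] x mf by simp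
    have ax2: "fmap A (h, f) x \<in> carr A (plist h (ctgt f))" using ss_fmap_pair_carr[OF A h f] x mf by simp
    have "fmap A (h, f) x = fmap A (h, cid (ctgt f)) (fmap A (id, f) x)"
      using ss_fmap_perm_cmor[OF H A h f] x mf by simp
    then show "(((id, cid (plist h (ctgt f))), fmap A (h, f) x), ((h, cid (ctgt f)), fmap A (id, f) x))
      \<in> ind_rel k H G A (plist h (ctgt f))"
      using ax ax2 hG h perm_subgroup_id[OF G] ctgt_mdegs[OF f] plist_mdegs[OF ctgt_mdegs[OF f]]
      by (simp add: ind_rel_iff)
  qed
  finally show "ind_unit k H G A (gcod m) (fmap A m x) = fmap (ind_obj k H G A) m (ind_unit k H G A (gdom m) x)"
    using mf by (simp add: ind_unit_def)
qed

context
  fixes B :: "'b ssobj" and eta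
  assumes B: "is_ss k G B" and eta: "nat_trans k H A B eta"
begin

lemma ind_eval_rel: assumes "(p, q) \<in> ind_rel k H G A d" shows "ind_eval B eta p = ind_eval B eta q"
  using assms
proof (rule ind_relE)
  fix g n a g' n' a'
  assume pq: "p = ((g, cid n), a)" "q = ((g', cid n'), a')"
    and p: "g \<in> G" "n \<in> mdegs k" "a \<in> carr A n" "plist g n = d"
    and q: "g' \<in> G" "n' \<in> mdegs k" "a' \<in> carr A n'" "plist g' n' = d"
    and hn: "plist (inv g \<circ> g') n' = n"
    and c: "(a = bpt A n \<and> a' = bpt A n') \<or> (inv g \<circ> g' \<in> H \<and> a = fmap A (inv g \<circ> g', cid n') a')"
  show ?thesis using c
  proof
    assume "a = bpt A n \<and> a' = bpt A n'"
    then show ?thesis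
      using pq p q nat_trans_bpt[OF eta] ss_fmap_perm_bpt[OF B] by simp
  next
    assume h: "inv g \<circ> g' \<in> H \<and> a = fmap A (inv g \<circ> g', cid n') a'"
    let ?h = "inv g \<circ> g'"
    have "eta n a = fmap B (?h, cid n') (eta n' a')"
      using nat_trans_fmap[OF eta _ cid_cmors[OF q(2)], of ?h a'] h q hn by simp
    moreover have "fmap B (g, cid (plist ?h n')) (fmap B (?h, cid n') (eta n' a')) = fmap B (g \<circ> ?h, cid n') (eta n' a')"
      by (rule ss_fmap_perm_perm[OF G B p(1) _ q(2) nat_trans_carr[OF eta q(2,3)]]) (use h HG in blast)
    moreover have "g \<circ> ?h = g'" using permutes_inv_o(1)[OF G_permutes[OF p(1)]] by (simp add: o_assoc)
    ultimately show ?thesis using pq hn by simp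
  qed
qed

lemma ind_eval_class_rep: assumes p: "ind_rep k G A d p" shows "ind_eval_class B eta d (ind_rel k H G A d `` {p}) = ind_eval B eta p"
proof -
  define q where "q = (SOME q. q \<in> ind_rel k H G A d `` {p})"
  have "p \<in> ind_rel k H G A d `` {p}" using equiv_class_self[OF ind_rel_equiv] p by simp
  then have "q \<in> ind_rel k H G A d `` {p}" unfolding q_def by (rule someI)
  then have "(p, q) \<in> ind_rel k H G A d" by simp
  then have "ind_eval B eta p = ind_eval B eta q" by (rule ind_eval_rel)
  then show ?thesis unfolding ind_eval_class_def q_def by simp
qed

lemma ind_eval_carr: assumes p: "ind_rep k G A d p" shows "ind_eval B eta p \<in> carr B d"
proof -
  obtain g n a where pe: "p = ((g, cid n), a)" "g \<in> G" "n \<in> mdegs k" "a \<in> carr A n" "plist g n = d"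
    using p by (auto elim: ind_repE)
  show ?thesis using ss_fmap_pair_carr[OF B pe(2) cid_cmors[OF pe(3)]] nat_trans_carr[OF eta pe(3,4)] pe by simp
qed

lemma nat_trans_ind_eval: "nat_trans k G (ind_obj k H G A) B (ind_eval_class B eta)"
  unfolding nat_trans_def
proof (intro conjI ballI)
  fix n assume n: "n \<in> mdegs k"
  show "ind_eval_class B eta n ` carr (ind_obj k H G A) n \<subseteq> carr B n"
    using ind_eval_class_rep ind_eval_carr by (auto elim!: quotientE)
  have v: "ind_rep k G A n ((id, cid n), bpt A n)" using n perm_subgroup_id[OF G] ss_bpt_carr[OF A n] by simp
  show "ind_eval_class B eta n (bpt (ind_obj k H G A) n) = bpt B n"
    using ind_eval_class_rep[OF v] ss_fmap_id[OF B n] ss_bpt_carr[OF B n] nat_trans_bpt[OF eta n] by simp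
next
  fix m x assume m: "m \<in> gmors k G" and x: "x \<in> carr (ind_obj k H G A) (gdom m)"
  obtain al f where mf: "m = (al, f)" by (cases m) blast
  have al: "al \<in> G" and f: "f \<in> cmors k" using m mf by (auto simp: gmors_def)
  obtain p where p: "ind_rep k G A (csrc f) p" "x = ind_rel k H G A (csrc f) `` {p}" using x mf by (auto elim: quotientE)
  obtain g n a where pe: "p = ((g, cid n), a)" "g \<in> G" "n \<in> mdegs k" "a \<in> carr A n" "plist g n = csrc f"
    using p by (auto elim: ind_repE)
  have gp: "g permutes {..<k}" using perm_subgroup_permutes[OF G pe(2)] .
  let ?c = "cact (inv g) f"
  have c: "?c \<in> cmors k" using cact_cmors[OF permutes_inv[OF gp] f] .
  have src: "csrc ?c = n" using pe(5) plist_inv_cancel[OF gp mdegsD[OF pe(3)]] by simp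
  have ea: "eta n a \<in> carr B (csrc ?c)" using nat_trans_carr[OF eta pe(3,4)] src by simp
  have v2: "ind_rep k G A (plist al (ctgt f)) (ind_mapp A (al, f) p)" using ind_mapp_rep[OF m[unfolded mf] p(1)] .
  have "ind_eval_class B eta (gcod m) (fmap (ind_obj k H G A) m x) = ind_eval B eta (ind_mapp A (al, f) p)"
    using ind_obj_fmap_class[OF m[unfolded mf] p(1)] p(2) mf ind_eval_class_rep[OF v2] by (simp del: ind_obj_simps(3))
  also have "\<dots> = fmap B (al \<circ> g, cid (ctgt ?c)) (eta (ctgt ?c) (fmap A (id, ?c) a))"
    using pe by simp
  also have "eta (ctgt ?c) (fmap A (id, ?c) a) = fmap B (id, ?c) (eta n a)"
    using nat_trans_fmap[OF eta perm_subgroup_id[OF H] c, of a] pe src by simp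
  also have "fmap B (al \<circ> g, cid (ctgt ?c)) (fmap B (id, ?c) (eta n a)) = fmap B (al \<circ> g, ?c) (eta n a)"
    using ss_fmap_perm_cmor[OF G B perm_subgroup_comp[OF G al pe(2)] c ea] by simp
  also have "\<dots> = fmap B (gcomp (al, f) (g, cid n)) (eta n a)"
    using gcomp_mor_perm[OF gp f] src by simp
  also have "\<dots> = fmap B (al, f) (fmap B (g, cid n) (eta n a))"
    using ss_fmap_comp[OF B, of "(al, f)" "(g, cid n)" "eta n a"] al f pe nat_trans_carr[OF eta pe(3,4)]
    by (simp add: gmorsI cid_cmors)
  also have "fmap B (g, cid n) (eta n a) = ind_eval_class B eta (gdom m) x"
    using ind_eval_class_rep[OF p(1)] p(2) pe mf by simp
  finally show "ind_eval_class B eta (gcod m) (fmap (ind_obj k H G A) m x) = fmap B m (ind_eval_class B eta (gdom m) x)"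
    using mf by simp
qed

lemma ind_eval_unit: "n \<in> mdegs k \<Longrightarrow> a \<in> carr A n \<Longrightarrow> ind_eval_class B eta n (ind_unit k H G A n a) = eta n a"
  unfolding ind_unit_def using perm_subgroup_id[OF G] ss_fmap_id[OF B _ nat_trans_carr[OF eta]]
  by (subst ind_eval_class_rep) simp_all

end

section \<open>The comparison homeomorphism\<close>

context
  fixes B :: "(gmor \<times> 'a) set ssobj" and eta
  assumes lan: "is_lan k H G A B eta"
begin

lemma lan_ss: "is_ss k G B" using lan by (simp add: is_lan_def)

lemma lan_ss_H: "is_ss k H B" using ss_mono[OF lan_ss HG] .

lemma lan_unit: "nat_trans k H A B eta" using lan by (simp add: is_lan_def)

text \<open>
  The universal property of $(B, \eta)$ is used only in the next three declarations, which identify $B$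
  with the explicit model.
\<close>

definition lan_to_ind :: "mdeg \<Rightarrow> (gmor \<times> 'a) set \<Rightarrow> (gmor \<times> 'a) set" where
  "lan_to_ind = (SOME s. nat_trans k G B (ind_obj k H G A) s \<and>
       (\<forall>n\<in>mdegs k. \<forall>x\<in>carr A n. s n (eta n x) = ind_unit k H G A n x))"

lemma lan_to_ind_spec: "nat_trans k G B (ind_obj k H G A) lan_to_ind \<and> (\<forall>n\<in>mdegs k. \<forall>x\<in>carr A n. lan_to_ind n (eta n x) = ind_unit k H G A n x)"
proof -
  have "\<exists>s. nat_trans k G B (ind_obj k H G A) s \<and> (\<forall>n\<in>mdegs k. \<forall>x\<in>carr A n. s n (eta n x) = ind_unit k H G A n x)"
    using lan is_ss_ind_obj nat_trans_ind_unit unfolding is_lan_def by blast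
  then show ?thesis unfolding lan_to_ind_def by (rule someI_ex)
qed

lemma lan_to_ind_ind_eval: assumes p: "ind_rep k G A d p" shows "lan_to_ind d (ind_eval B eta p) = ind_rel k H G A d `` {p}"
proof -
  obtain g n a where pe: "p = ((g, cid n), a)" "g \<in> G" "n \<in> mdegs k" "a \<in> carr A n" "plist g n = d"
    using p by (auto elim: ind_repE)
  have "lan_to_ind d (ind_eval B eta p) = fmap (ind_obj k H G A) (g, cid n) (lan_to_ind n (eta n a))"
    using nat_trans_fmap[OF conjunct1[OF lan_to_ind_spec] pe(2) cid_cmors[OF pe(3)]] nat_trans_carr[OF lan_unit pe(3,4)] pe by simp
  also have "\<dots> = fmap (ind_obj k H G A) (g, cid n) (ind_rel k H G A n `` {((id, cid n), a)})"
    using lan_to_ind_spec pe by (simp add: ind_unit_def del: ind_obj_simps(3))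
  also have "\<dots> = ind_rel k H G A d `` {p}"
    using ind_obj_fmap_class[of g "cid n" "((id, cid n), a)"] pe perm_subgroup_id[OF G] ss_fmap_id[OF A pe(3,4)]
    by (simp add: gmorsI cid_cmors del: ind_obj_simps(3))
  finally show ?thesis .
qed

lemma ind_eval_lan_to_ind: assumes n: "n \<in> mdegs k" and b: "b \<in> carr B n" shows "ind_eval_class B eta n (lan_to_ind n b) = b"
proof -
  obtain s0 where s0: "nat_trans k G B B s0"
    "\<forall>s'. nat_trans k G B B s' \<and> (\<forall>n\<in>mdegs k. \<forall>x\<in>carr A n. s' n (eta n x) = eta n x) \<longrightarrow>
         (\<forall>n\<in>mdegs k. \<forall>y\<in>carr B n. s' n y = s0 n y)"
    using lan lan_ss lan_unit unfolding is_lan_def by blast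
  have "nat_trans k G B B (\<lambda>n y. ind_eval_class B eta n (lan_to_ind n y))"
    by (rule nat_trans_comp[OF conjunct1[OF lan_to_ind_spec] nat_trans_ind_eval[OF lan_ss lan_unit]])
  moreover have "\<forall>n\<in>mdegs k. \<forall>x\<in>carr A n. ind_eval_class B eta n (lan_to_ind n (eta n x)) = eta n x"
    using lan_to_ind_spec ind_eval_unit[OF lan_ss lan_unit] by simp
  ultimately have "ind_eval_class B eta n (lan_to_ind n b) = s0 n b" using s0(2) n b by blast
  \<comment> \<open>the identity extends $\eta$ as well, so uniqueness identifies both with \<open>s0\<close>\<close>
  moreover have "(\<lambda>n y. y) n b = s0 n b" using s0(2) nat_trans_id[OF lan_ss] n b by blast
  ultimately show ?thesis by simp
qed

lemma lan_elementE: assumes n: "d \<in> mdegs k" and b: "b \<in> carr B d"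
  obtains g m a where "g \<in> G" "m \<in> mdegs k" "a \<in> carr A m" "plist g m = d" "b = fmap B (g, cid m) (eta m a)"
proof -
  have "lan_to_ind d b \<in> carr (ind_obj k H G A) d" using nat_trans_carr[OF conjunct1[OF lan_to_ind_spec] n b] .
  then obtain p where p: "ind_rep k G A d p" "lan_to_ind d b = ind_rel k H G A d `` {p}" by (auto elim: quotientE)
  then have "b = ind_eval B eta p" using ind_eval_lan_to_ind[OF n b] ind_eval_class_rep[OF lan_ss lan_unit p(1)] by simp
  then show ?thesis using p(1) that by (auto elim!: ind_repE)
qed

lemma ind_rel_of_ind_eval: assumes p: "ind_rep k G A d p" and q: "ind_rep k G A d q" and e: "ind_eval B eta p = ind_eval B eta q"
  shows "(p, q) \<in> ind_rel k H G A d"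
proof -
  have "ind_rel k H G A d `` {p} = ind_rel k H G A d `` {q}" using lan_to_ind_ind_eval[OF p] lan_to_ind_ind_eval[OF q] e by simp
  then show ?thesis using eq_equiv_class_iff[OF ind_rel_equiv] p q by blast
qed

definition lan_rep :: "mdeg \<Rightarrow> (gmor \<times> 'a) set \<Rightarrow> perm \<times> mdeg \<times> 'a \<Rightarrow> bool" where
  "lan_rep d b t \<longleftrightarrow> (case t of (g, m, a) \<Rightarrow>
     g \<in> G \<and> m \<in> mdegs k \<and> a \<in> carr A m \<and> plist g m = d \<and> b = fmap B (g, cid m) (eta m a))"

definition some_lan_rep :: "mdeg \<Rightarrow> (gmor \<times> 'a) set \<Rightarrow> perm \<times> mdeg \<times> 'a" where
  "some_lan_rep d b = (SOME t. lan_rep d b t)"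

definition smash_of_rep :: "perm \<times> mdeg \<times> 'a \<Rightarrow> (nat \<Rightarrow> nat \<Rightarrow> real) \<Rightarrow> 'a spt" where
  "smash_of_rep t u = (case t of (g, m, a) \<Rightarrow> smash_class k H G A (g, real_class k A (m, uperm k (inv g) u, a)))"

definition real_to_smash_pre :: "(gmor \<times> 'a) set rpre \<Rightarrow> 'a spt" where
  "real_to_smash_pre p = (case p of (n, u, b) \<Rightarrow> smash_of_rep (some_lan_rep n b) u)"

definition real_to_smash :: "(gmor \<times> 'a) set rpt \<Rightarrow> 'a spt" where
  "real_to_smash x = real_to_smash_pre (SOME p. p \<in> x)"

definition smash_to_real :: "'a spt \<Rightarrow> (gmor \<times> 'a) set rpt" where
  "smash_to_real y = (let q = SOME q. q \<in> y in real_act k B (fst q) (real_map k A B eta (snd q)))"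

lemma lan_rep_triple: "lan_rep d b (g, m, a) \<longleftrightarrow> g \<in> G \<and> m \<in> mdegs k \<and> a \<in> carr A m \<and> plist g m = d \<and>
   b = fmap B (g, cid m) (eta m a)" by (simp add: lan_rep_def)

lemma smash_of_rep_triple: "smash_of_rep (g, m, a) u = smash_class k H G A (g, real_class k A (m, uperm k (inv g) u, a))"
  by (simp add: smash_of_rep_def)

lemma some_lan_rep_is_rep: assumes n: "n \<in> mdegs k" and b: "b \<in> carr B n" shows "lan_rep n b (some_lan_rep n b)"
proof -
  obtain g m a where "g \<in> G" "m \<in> mdegs k" "a \<in> carr A m" "plist g m = n" "b = fmap B (g, cid m) (eta m a)"
    using lan_elementE[OF n b] .
  then have "lan_rep n b (g, m, a)" by (simp add: lan_rep_triple)
  then show ?thesis unfolding some_lan_rep_def by (rule someI)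
qed

lemma real_class_A_topspace: "m \<in> mdegs k \<Longrightarrow> v \<in> msimplex m \<Longrightarrow> a \<in> carr A m \<Longrightarrow> real_class k A (m, v, a) \<in> topspace (realization k A)"
  by (rule real_class_topspace[OF H A]) simp

lemma uperm_inv_msimplex:
  assumes "g \<in> G" "m \<in> mdegs k" "u \<in> msimplex (plist g m)"
  shows "uperm k (inv g) u \<in> msimplex m"
  using uperm_msimplex[OF assms(3) _ permutes_inv[OF G_permutes[OF assms(1)]]]
    plist_inv_cancel[OF G_permutes[OF assms(1)] mdegsD[OF assms(2)]] mdegsD[OF assms(2)] by simp

lemma smash_of_rep_bpt:
  assumes "g \<in> G" "m \<in> mdegs k" "u \<in> msimplex (plist g m)"
  shows "smash_of_rep (g, m, bpt A m) u = smash_class k H G A (id, real_base k A)"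
proof -
  have "smash_of_rep (g, m, bpt A m) u = smash_class k H G A (g, real_base k A)"
    using real_class_bpt[OF H A assms(2) uperm_inv_msimplex[OF assms]] by (simp add: smash_of_rep_triple)
  also have "\<dots> = smash_class k H G A (id, real_base k A)"
    using smash_class_base[OF G H HG A assms(1) perm_subgroup_id[OF G]] .
  finally show ?thesis .
qed

lemma smash_of_rep_shift:
  assumes g: "g \<in> G" and h: "h \<in> H" and m: "m \<in> mdegs k" and a: "a \<in> carr A m"
    and u: "u \<in> msimplex (plist (g \<circ> h) m)"
  shows "smash_of_rep (g \<circ> h, m, a) u = smash_of_rep (g, plist h m, fmap A (h, cid m) a) u"
proof -
  have gp: "g permutes {..<k}" and hp: "h permutes {..<k}" using G_permutes g h HG by auto
  let ?v = "uperm k (inv (g \<circ> h)) u"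
  have v: "?v \<in> msimplex m" using uperm_inv_msimplex[OF perm_subgroup_comp[OF G g] m u] h HG by auto
  have "uperm k h ?v = uperm k (h \<circ> (inv h \<circ> inv g)) u"
    using uperm_comp[OF hp permutes_inv[OF permutes_compose[OF hp gp]]] inv_comp_permutes[OF gp hp] by simp
  also have "h \<circ> (inv h \<circ> inv g) = inv g" using permutes_inv_o(1)[OF hp] by (simp add: o_assoc)
  finally have hv: "uperm k h ?v = uperm k (inv g) u" .
  have "smash_of_rep (g \<circ> h, m, a) u = smash_class k H G A (g \<circ> h, real_class k A (m, ?v, a))"
    by (simp add: smash_of_rep_triple)
  also have "\<dots> = smash_class k H G A (g, real_act k A h (real_class k A (m, ?v, a)))"
    by (rule smash_class_shift[OF G H HG A g h real_class_A_topspace[OF m v a]])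
  also have "real_act k A h (real_class k A (m, ?v, a)) = real_class k A (plist h m, uperm k (inv g) u, fmap A (h, cid m) a)"
    using real_act_class[OF H A h, of "(m, ?v, a)"] m v a hv by (simp add: pt_act_triple)
  also have "smash_class k H G A (g, \<dots>) = smash_of_rep (g, plist h m, fmap A (h, cid m) a) u"
    by (simp add: smash_of_rep_triple)
  finally show ?thesis .
qed

lemma smash_of_rep_indep: assumes t: "lan_rep n b (g, m, a)" and t': "lan_rep n b (g', m', a')" and u: "u \<in> msimplex n"
  shows "smash_of_rep (g, m, a) u = smash_of_rep (g', m', a') u"
proof -
  have g: "g \<in> G" "m \<in> mdegs k" "a \<in> carr A m" "plist g m = n" and bb: "b = fmap B (g, cid m) (eta m a)"
    using t by (auto simp: lan_rep_triple)
  have g': "g' \<in> G" "m' \<in> mdegs k" "a' \<in> carr A m'" "plist g' m' = n" and bb': "b = fmap B (g', cid m') (eta m' a')"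
    using t' by (auto simp: lan_rep_triple)
  have "(((g, cid m), a), ((g', cid m'), a')) \<in> ind_rel k H G A n"
    by (rule ind_rel_of_ind_eval) (use g g' bb bb' in simp_all)
  then have c: "(a = bpt A m \<and> a' = bpt A m') \<or> (inv g \<circ> g' \<in> H \<and> a = fmap A (inv g \<circ> g', cid m') a')"
    by (simp add: ind_rel_iff)
  then show ?thesis
  proof
    assume "a = bpt A m \<and> a' = bpt A m'"
    then show ?thesis using smash_of_rep_bpt g g' u by simp
  next
    assume c: "inv g \<circ> g' \<in> H \<and> a = fmap A (inv g \<circ> g', cid m') a'"
    have "g \<circ> (inv g \<circ> g') = g'" using permutes_inv_o(1)[OF G_permutes[OF g(1)]] by (simp add: o_assoc)
    then show ?thesis
      using smash_of_rep_shift[OF g(1) conjunct1[OF c] g'(2,3)] c plist_inv_comp_eq[OF g(1) g'(1) g(2) g'(2)]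
        g(4) g'(4) u by simp
  qed
qed

lemma real_to_smash_pre_rep: assumes n: "n \<in> mdegs k" and b: "b \<in> carr B n" and t: "lan_rep n b t" and u: "u \<in> msimplex n"
  shows "real_to_smash_pre (n, u, b) = smash_of_rep t u"
proof -
  obtain g m a where t1: "t = (g, m, a)" by (cases t)
  obtain g' m' a' where t2: "some_lan_rep n b = (g', m', a')" by (cases "some_lan_rep n b")
  show ?thesis unfolding real_to_smash_pre_def
    using smash_of_rep_indep[of n b g' m' a' g m a u] some_lan_rep_is_rep[OF n b] t t1 t2 u by simp
qed

lemma lan_rep_bpt: "n \<in> mdegs k \<Longrightarrow> lan_rep n (bpt B n) (id, n, bpt A n)"
  using perm_subgroup_id[OF G] ss_bpt_carr[OF A] nat_trans_bpt[OF lan_unit] ss_fmap_id[OF lan_ss _ ss_bpt_carr[OF lan_ss]] by (simp add: lan_rep_triple)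

lemma lan_rep_face:
  assumes f: "f \<in> cmors k" and t: "lan_rep (csrc f) b (g, m, a)"
  shows "lan_rep (ctgt f) (fmap B (id, f) b) (g, ctgt (cact (inv g) f), fmap A (id, cact (inv g) f) a)"
proof -
  have g: "g \<in> G" "m \<in> mdegs k" "a \<in> carr A m" "plist g m = csrc f" and bb: "b = fmap B (g, cid m) (eta m a)"
    using t by (auto simp: lan_rep_triple)
  have gp: "g permutes {..<k}" using G_permutes[OF g(1)] .
  let ?c = "cact (inv g) f"
  have c: "?c \<in> cmors k" using cact_cmors[OF permutes_inv[OF gp] f] .
  have src: "csrc ?c = m" using g(4) plist_inv_cancel[OF gp mdegsD[OF g(2)]] by simp
  have ea: "eta m a \<in> carr B (csrc ?c)" using nat_trans_carr[OF lan_unit g(2,3)] src by simp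
  have aa: "a \<in> carr A (csrc ?c)" using g(3) src by simp
  have "fmap B (id, f) b = fmap B (gcomp (id, f) (g, cid m)) (eta m a)"
    using ss_fmap_comp[OF lan_ss, of "(id, f)" "(g, cid m)" "eta m a"] bb f g perm_subgroup_id[OF G] nat_trans_carr[OF lan_unit g(2,3)]
    by (simp add: gmorsI cid_cmors)
  also have "gcomp (id, f) (g, cid m) = (g, ?c)" using gcomp_mor_perm[OF gp f] g(4) src by simp
  also have "fmap B (g, ?c) (eta m a) = fmap B (g, cid (ctgt ?c)) (fmap B (id, ?c) (eta m a))"
    using ss_fmap_perm_cmor[OF G lan_ss g(1) c ea] by simp
  also have "fmap B (id, ?c) (eta m a) = eta (ctgt ?c) (fmap A (id, ?c) a)"
    using nat_trans_fmap[OF lan_unit perm_subgroup_id[OF H] c aa] src by simp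
  finally have "fmap B (id, f) b = fmap B (g, cid (ctgt ?c)) (eta (ctgt ?c) (fmap A (id, ?c) a))" .
  then show ?thesis
    unfolding lan_rep_triple using g(1) ctgt_mdegs[OF c] ss_fmap_pair_carr[OF A perm_subgroup_id[OF H] c aa]
      plist_cancel_inv[OF gp mdegsD[OF ctgt_mdegs[OF f]]] by simp
qed

lemma real_to_smash_pre_gen: assumes gpq: "real_gen k B p q" shows "real_to_smash_pre p = real_to_smash_pre q"
  using gpq[unfolded real_gen_def]
proof (elim disjE bexE conjE)
  fix f u b assume f: "f \<in> cmors k" and u: "u \<in> msimplex (ctgt f)" and b: "b \<in> carr B (csrc f)"
    and p: "p = (csrc f, cpush f u, b)" and q: "q = (ctgt f, u, fmap B (id, f) b)"
  obtain g m a where r: "some_lan_rep (csrc f) b = (g, m, a)" by (cases "some_lan_rep (csrc f) b")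
  have t: "lan_rep (csrc f) b (g, m, a)" using some_lan_rep_is_rep[OF csrc_mdegs[OF f] b] r by simp
  then have g: "g \<in> G" "a \<in> carr A m" "plist g m = csrc f" "m \<in> mdegs k" by (auto simp: lan_rep_triple)
  have gp: "g permutes {..<k}" using G_permutes[OF g(1)] .
  let ?c = "cact (inv g) f" and ?v = "uperm k (inv g) u"
  have c: "?c \<in> cmors k" using cact_cmors[OF permutes_inv[OF gp] f] .
  have src: "csrc ?c = m" using g(3) plist_inv_cancel[OF gp mdegsD[OF g(4)]] by simp
  have v: "?v \<in> msimplex (ctgt ?c)"
    using uperm_msimplex[OF u mdegsD[OF ctgt_mdegs[OF f]] permutes_inv[OF gp]] by simp
  have "real_to_smash_pre p = smash_class k H G A (g, real_class k A (csrc ?c, cpush ?c ?v, a))"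
    using real_to_smash_pre_rep[OF csrc_mdegs[OF f] b t cpush_msimplex[OF f u]] p src
      uperm_cpush[OF f permutes_inv[OF gp]] by (simp add: smash_of_rep_triple)
  also have "real_class k A (csrc ?c, cpush ?c ?v, a) = real_class k A (ctgt ?c, ?v, fmap A (id, ?c) a)"
    using real_class_face[OF H A c v] g(2) src by simp
  also have "smash_class k H G A (g, \<dots>) = real_to_smash_pre q"
    using real_to_smash_pre_rep[OF ctgt_mdegs[OF f] _ lan_rep_face[OF f t] u] q
      ss_fmap_pair_carr[OF lan_ss perm_subgroup_id[OF G] f b] by (simp add: smash_of_rep_triple)
  finally show ?thesis .
next
  fix n m u v assume nm: "n \<in> mdegs k" "m \<in> mdegs k" "u \<in> msimplex n" "v \<in> msimplex m"
    and pq: "p = (n, u, bpt B n)" "q = (m, v, bpt B m)"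
  show ?thesis
    using real_to_smash_pre_rep[OF nm(1) ss_bpt_carr[OF lan_ss nm(1)] lan_rep_bpt[OF nm(1)] nm(3)]
      real_to_smash_pre_rep[OF nm(2) ss_bpt_carr[OF lan_ss nm(2)] lan_rep_bpt[OF nm(2)] nm(4)]
      smash_of_rep_bpt[OF perm_subgroup_id[OF G]] nm pq by simp
qed

lemma real_to_smash_class: assumes p: "p \<in> topspace (pre_real k B)" shows "real_to_smash (real_class k B p) = real_to_smash_pre p"
  unfolding real_to_smash_def using real_class_descend[OF G lan_ss p, of real_to_smash_pre, OF real_to_smash_pre_gen] .

lemma smash_to_real_class: assumes g: "g \<in> G" and x: "x \<in> topspace (realization k A)"
  shows "smash_to_real (smash_class k H G A (g, x)) = real_act k B g (real_map k A B eta x)"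
proof -
  have p: "(g, x) \<in> topspace (smash_pre k G A)" using g x by (simp add: topspace_smash_pre)
  have "real_act k B (fst a) (real_map k A B eta (snd a)) = real_act k B (fst b) (real_map k A B eta (snd b))"
    if "smash_gen k H G A a b" for a b
    using that unfolding smash_gen_def
  proof (elim disjE bexE conjE)
    fix g h x assume gh: "g \<in> G" "h \<in> H" "x \<in> topspace (realization k A)" "a = (g \<circ> h, x)" "b = (g, real_act k A h x)"
    then show ?thesis
      using real_act_comp[OF G lan_ss gh(1) _ real_map_topspace[OF H A lan_ss_H lan_unit gh(3)], of h]
        real_map_act[OF H A lan_ss_H lan_unit gh(2,3)] HG by auto
  qed (simp add: real_map_base[OF H A lan_ss_H lan_unit] real_act_base[OF G lan_ss])
  from smash_descend[OF G H HG A p, of "\<lambda>q. real_act k B (fst q) (real_map k A B eta (snd q))", OF this]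
  show ?thesis by (simp add: smash_to_real_def Let_def smash_class_def)
qed

lemma smash_triple_pointE: assumes y: "y \<in> topspace (smash k H G A)"
  obtains g m v a where "g \<in> G" "m \<in> mdegs k" "v \<in> msimplex m" "a \<in> carr A m"
    "y = smash_class k H G A (g, real_class k A (m, v, a))"
proof -
  obtain p where p: "p \<in> topspace (smash_pre k G A)" "y = smash_class k H G A p" using smash_pointE[OF G H HG A y] .
  obtain g x where gx: "p = (g, x)" "g \<in> G" "x \<in> topspace (realization k A)" using p(1) by (auto simp: topspace_smash_pre)
  obtain q where q: "q \<in> topspace (pre_real k A)" "x = real_class k A q" using realization_pointE[OF H A gx(3)] .
  obtain m v a where "q = (m, v, a)" "m \<in> mdegs k" "v \<in> msimplex m" "a \<in> carr A m" using pre_real_pointE[OF H A q(1)] .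
  then show ?thesis using that p gx q by blast
qed

lemma realization_B_pointE: assumes x: "x \<in> topspace (realization k B)"
  obtains n u b where "n \<in> mdegs k" "u \<in> msimplex n" "b \<in> carr B n" "x = real_class k B (n, u, b)"
proof -
  obtain q where q: "q \<in> topspace (pre_real k B)" "x = real_class k B q" using realization_pointE[OF G lan_ss x] .
  obtain n u b where "q = (n, u, b)" "n \<in> mdegs k" "u \<in> msimplex n" "b \<in> carr B n" using pre_real_pointE[OF G lan_ss q(1)] .
  then show ?thesis using that q by blast
qed

lemma smash_to_real_triple: assumes g: "g \<in> G" and m: "m \<in> mdegs k" and v: "v \<in> msimplex m" and a: "a \<in> carr A m"
  shows "smash_to_real (smash_class k H G A (g, real_class k A (m, v, a))) =
     real_class k B (plist g m, uperm k g v, fmap B (g, cid m) (eta m a))"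
proof -
  have "smash_to_real (smash_class k H G A (g, real_class k A (m, v, a))) = real_act k B g (real_map k A B eta (real_class k A (m, v, a)))"
    by (rule smash_to_real_class[OF g real_class_A_topspace[OF m v a]])
  also have "real_map k A B eta (real_class k A (m, v, a)) = real_class k B (m, v, eta m a)"
    by (rule real_map_class[OF H A lan_ss_H lan_unit]) (use m v a in simp)
  also have "real_act k B g \<dots> = real_class k B (pt_act k B g (m, v, eta m a))"
    by (rule real_act_class[OF G lan_ss g]) (use m v nat_trans_carr[OF lan_unit m a] in simp)
  finally show ?thesis by (simp add: pt_act_triple)
qed

lemma real_to_smash_inverse: assumes y: "y \<in> topspace (smash k H G A)" shows "real_to_smash (smash_to_real y) = y"
proof -
  obtain g m v a where e: "g \<in> G" "m \<in> mdegs k" "v \<in> msimplex m" "a \<in> carr A m"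
    "y = smash_class k H G A (g, real_class k A (m, v, a))" using smash_triple_pointE[OF y] .
  have gp: "g permutes {..<k}" using perm_subgroup_permutes[OF G e(1)] .
  have gm: "plist g m \<in> mdegs k" using plist_mdegs[OF e(2)] .
  have bb: "fmap B (g, cid m) (eta m a) \<in> carr B (plist g m)"
    using ss_fmap_pair_carr[OF lan_ss e(1) cid_cmors[OF e(2)]] nat_trans_carr[OF lan_unit e(2,4)] by simp
  have uv: "uperm k g v \<in> msimplex (plist g m)" using uperm_msimplex[OF e(3) mdegsD[OF e(2)] gp] .
  have "real_to_smash (smash_to_real y) = real_to_smash_pre (plist g m, uperm k g v, fmap B (g, cid m) (eta m a))"
    using smash_to_real_triple[OF e(1-4)] e(5) real_to_smash_class gm uv bb by simp
  also have "\<dots> = smash_of_rep (g, m, a) (uperm k g v)"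
    by (rule real_to_smash_pre_rep[OF gm bb _ uv]) (use e in \<open>simp add: lan_rep_triple\<close>)
  also have "\<dots> = y" using e uperm_inv[OF e(3) mdegsD[OF e(2)] gp] by (simp add: smash_of_rep_triple)
  finally show ?thesis .
qed

lemma real_to_smash_triple: assumes n: "n \<in> mdegs k" and u: "u \<in> msimplex n" and b: "b \<in> carr B n"
    and t: "lan_rep n b (g, m, a)"
  shows "real_to_smash (real_class k B (n, u, b)) = smash_class k H G A (g, real_class k A (m, uperm k (inv g) u, a))"
  using real_to_smash_class[of "(n, u, b)"] real_to_smash_pre_rep[OF n b t u] n u b by (simp add: smash_of_rep_triple)

lemma lan_rep_facts: assumes n: "n \<in> mdegs k" and u: "u \<in> msimplex n" and t: "lan_rep n b (g, m, a)"
  shows "g \<in> G" "m \<in> mdegs k" "a \<in> carr A m" "uperm k (inv g) u \<in> msimplex m"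
    "uperm k g (uperm k (inv g) u) = u"
proof -
  show g: "g \<in> G" "m \<in> mdegs k" "a \<in> carr A m" using t by (auto simp: lan_rep_triple)
  have gp: "g permutes {..<k}" using perm_subgroup_permutes[OF G g(1)] .
  have pm: "plist g m = n" using t by (simp add: lan_rep_triple)
  show "uperm k (inv g) u \<in> msimplex m"
    using uperm_msimplex[OF u mdegsD[OF n] permutes_inv[OF gp]] pm plist_inv_cancel[OF gp mdegsD[OF g(2)]] by simp
  show "uperm k g (uperm k (inv g) u) = u"
    using uperm_inv[OF u mdegsD[OF n] permutes_inv[OF gp]] permutes_inv_inv[OF gp] by simp
qed

lemma smash_to_real_inverse: assumes x: "x \<in> topspace (realization k B)" shows "smash_to_real (real_to_smash x) = x"
proof -
  obtain n u b where e: "n \<in> mdegs k" "u \<in> msimplex n" "b \<in> carr B n" "x = real_class k B (n, u, b)"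
    using realization_B_pointE[OF x] .
  obtain g m a where r: "some_lan_rep n b = (g, m, a)" by (cases "some_lan_rep n b") auto
  have t: "lan_rep n b (g, m, a)" using some_lan_rep_is_rep[OF e(1,3)] r by simp
  note rf = lan_rep_facts[OF e(1,2) t]
  have "smash_to_real (real_to_smash x) = smash_to_real (smash_class k H G A (g, real_class k A (m, uperm k (inv g) u, a)))"
    using real_to_smash_triple[OF e(1-3) t] e(4) by simp
  also have "\<dots> = real_class k B (plist g m, uperm k g (uperm k (inv g) u), fmap B (g, cid m) (eta m a))"
    by (rule smash_to_real_triple[OF rf(1,2,4,3)])
  also have "\<dots> = x" using t rf(5) e(4) by (simp add: lan_rep_triple)
  finally show ?thesis .
qed

lemma real_to_smash_base: "real_to_smash (real_base k B) = smash_base k H G A"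
proof -
  let ?z = "replicate k 0"
  have z: "?z \<in> mdegs k" by (simp add: mdegs_def)
  have v: "vertex0 k \<in> msimplex ?z" using vertex0_msimplex[OF G lan_ss] .
  have "real_to_smash (real_base k B) = smash_class k H G A (id, real_class k A (?z, uperm k (inv id) (vertex0 k), bpt A ?z))"
    unfolding real_base_def by (rule real_to_smash_triple[OF z v ss_bpt_carr[OF lan_ss z] lan_rep_bpt[OF z]])
  also have "real_class k A (?z, uperm k (inv id) (vertex0 k), bpt A ?z) = real_base k A"
    by (rule real_class_bpt[OF H A z]) (use uperm_msimplex[OF v _ permutes_inv[OF permutes_id]] in simp)
  finally show ?thesis by (simp add: smash_base_def id_def)
qed

lemma real_to_smash_act: assumes al: "al \<in> G" and x: "x \<in> topspace (realization k B)"
  shows "real_to_smash (real_act k B al x) = smash_act k H G A al (real_to_smash x)"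
proof -
  obtain n u b where e: "n \<in> mdegs k" "u \<in> msimplex n" "b \<in> carr B n" "x = real_class k B (n, u, b)"
    using realization_B_pointE[OF x] .
  obtain g m a where r: "some_lan_rep n b = (g, m, a)" by (cases "some_lan_rep n b") auto
  have t: "lan_rep n b (g, m, a)" using some_lan_rep_is_rep[OF e(1,3)] r by simp
  note rf = lan_rep_facts[OF e(1,2) t]
  have gp: "g permutes {..<k}" and ap: "al permutes {..<k}" using perm_subgroup_permutes[OF G] rf(1) al by auto
  have pm: "plist g m = n" and bb: "b = fmap B (g, cid m) (eta m a)" using t by (auto simp: lan_rep_triple)
  have n2: "plist al n \<in> mdegs k" using plist_mdegs[OF e(1)] .
  have u2: "uperm k al u \<in> msimplex (plist al n)" using uperm_msimplex[OF e(2) mdegsD[OF e(1)] ap] .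
  have b2: "fmap B (al, cid n) b \<in> carr B (plist al n)" using ss_fmap_pair_carr[OF lan_ss al cid_cmors[OF e(1)]] e(3) by simp
  have t2: "lan_rep (plist al n) (fmap B (al, cid n) b) (al \<circ> g, m, a)"
  proof -
    have "fmap B (al, cid n) b = fmap B (al \<circ> g, cid m) (eta m a)"
      using ss_fmap_perm_perm[OF G lan_ss al rf(1) rf(2) nat_trans_carr[OF lan_unit rf(2,3)]] pm bb by simp
    moreover have "plist (al \<circ> g) m = plist al n" using plist_comp[OF ap gp mdegsD[OF rf(2)]] pm by simp
    ultimately show ?thesis using perm_subgroup_comp[OF G al rf(1)] rf by (simp add: lan_rep_triple)
  qed
  have uu: "uperm k (inv (al \<circ> g)) (uperm k al u) = uperm k (inv g) u"
    using uperm_comp[OF permutes_inv[OF permutes_compose[OF gp ap]] ap] inv_comp_permutes[OF ap gp]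
      permutes_inv_o(2)[OF ap] by (simp add: o_assoc[symmetric])
  have "real_to_smash (real_act k B al x) = real_to_smash (real_class k B (plist al n, uperm k al u, fmap B (al, cid n) b))"
    using real_act_class[OF G lan_ss al, of "(n, u, b)"] e by (simp add: pt_act_triple)
  also have "\<dots> = smash_class k H G A (al \<circ> g, real_class k A (m, uperm k (inv g) u, a))"
    using real_to_smash_triple[OF n2 u2 b2 t2] uu by simp
  also have "\<dots> = smash_act k H G A al (smash_class k H G A (g, real_class k A (m, uperm k (inv g) u, a)))"
    using smash_act_class[OF G H HG A al, of "(g, real_class k A (m, uperm k (inv g) u, a))"] rf real_class_A_topspace[OF rf(2,4,3)]
    by (simp add: topspace_smash_pre)
  also have "\<dots> = smash_act k H G A al (real_to_smash x)" using real_to_smash_triple[OF e(1-3) t] e(4) by simp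
  finally show ?thesis .
qed

lemma continuous_map_smash_to_real: "continuous_map (smash k H G A) (realization k B) smash_to_real"
proof (rule continuous_compose_quotient_map[OF quotient_map_smash_class[OF G H HG A]])
  have "continuous_map (smash_pre k G A) (realization k B) (\<lambda>p. real_act k B (fst p) (real_map k A B eta (snd p)))"
    unfolding smash_pre_def
    by (rule continuous_map_from_discrete_prod)
      (simp add: continuous_map_compose[OF continuous_map_real_map[OF H A lan_ss_H lan_unit]
          continuous_map_real_act[OF G lan_ss], unfolded o_def])
  then show "continuous_map (smash_pre k G A) (realization k B) (smash_to_real \<circ> smash_class k H G A)"
    by (rule continuous_map_eq) (auto simp: smash_to_real_class topspace_smash_pre)
qed

lemma continuous_map_real_to_smash: "continuous_map (realization k B) (smash k H G A) real_to_smash"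
proof (rule continuous_compose_quotient_map[OF quotient_map_real_class[OF G lan_ss]])
  have "continuous_map (pre_real k B) (smash k H G A) real_to_smash_pre"
  proof (rule continuous_map_from_pre_real)
    fix n b assume n: "n \<in> mdegs k" and b: "b \<in> carr B n"
    obtain g m a where r: "some_lan_rep n b = (g, m, a)" by (cases "some_lan_rep n b")
    have t: "lan_rep n b (g, m, a)" using some_lan_rep_is_rep[OF n b] r by simp
    have g: "g \<in> G" "m \<in> mdegs k" "a \<in> carr A m" "plist g m = n" using t by (auto simp: lan_rep_triple)
    have gp: "g permutes {..<k}" using G_permutes[OF g(1)] .
    have "continuous_map (simplex_top n) (simplex_top m) (uperm k (inv g))"
      using continuous_map_uperm[OF permutes_inv[OF gp] mdegsD[OF n]] g(4) plist_inv_cancel[OF gp mdegsD[OF g(2)]] by simp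
    moreover have "continuous_map (realization k A) (smash_pre k G A) (\<lambda>x. (g, x))"
      unfolding smash_pre_def by (rule continuous_map_pairedI) (use g in simp_all)
    ultimately have "continuous_map (simplex_top n) (smash k H G A)
        (\<lambda>u. smash_class k H G A (g, real_class k A (m, uperm k (inv g) u, a)))"
      using continuous_map_compose[OF continuous_map_compose[OF continuous_map_compose
          [OF _ continuous_map_real_class[OF H A g(2,3)]]] quotient_imp_continuous_map[OF quotient_map_smash_class[OF G H HG A]]]
      by (simp add: o_def)
    then show "continuous_map (simplex_top n) (smash k H G A) (\<lambda>u. real_to_smash_pre (n, u, b))"
      by (rule continuous_map_eq) (simp add: real_to_smash_pre_rep[OF n b t] smash_of_rep_triple)
  qed
  then show "continuous_map (pre_real k B) (smash k H G A) (real_to_smash \<circ> real_class k B)"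
    by (rule continuous_map_eq) (simp add: real_to_smash_class)
qed

lemma real_to_smash_based_G_homeo: "based_G_homeo G (realization k B) (real_base k B) (real_act k B)
    (smash k H G A) (smash_base k H G A) (smash_act k H G A) (real_to_smash)"
  unfolding based_G_homeo_def
proof (intro conjI ballI)
  show "homeomorphic_map (realization k B) (smash k H G A) (real_to_smash)"
    unfolding homeomorphic_map_maps homeomorphic_maps_def
    using continuous_map_real_to_smash continuous_map_smash_to_real real_to_smash_inverse smash_to_real_inverse by blast
  show "real_to_smash (real_base k B) = smash_base k H G A" using real_to_smash_base .
  fix al x assume "al \<in> G" "x \<in> topspace (realization k B)"
  then show "real_to_smash (real_act k B al x) = smash_act k H G A al (real_to_smash x)"
    using real_to_smash_act by blast
qed

end



end

lemma smash_map_class: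
  assumes G: "perm_subgroup k G" and H: "perm_subgroup k H" and HG: "H \<subseteq> G"
    and A: "is_ss k H A" and A': "is_ss k H A'" and s: "nat_trans k H A A' s"
    and g: "g \<in> G" and y: "y \<in> topspace (realization k A)"
  shows "smash_map k H G A A' s (smash_class k H G A (g, y)) = smash_class k H G A' (g, real_map k A A' s y)"
proof -
  have p: "(g, y) \<in> topspace (smash_pre k G A)" using g y by (simp add: topspace_smash_pre)
  have "smash_class k H G A' (fst a, real_map k A A' s (snd a)) = smash_class k H G A' (fst b, real_map k A A' s (snd b))"
    if "smash_gen k H G A a b" for a b
    using that unfolding smash_gen_def
  proof (elim disjE bexE conjE)
    fix g g' assume "g \<in> G" "g' \<in> G" "a = (g, real_base k A)" "b = (g', real_base k A)"
    then show ?thesis using smash_class_base[OF G H HG A', of g g'] real_map_base[OF H A A' s] by simp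
  next
    fix g h x assume "g \<in> G" "h \<in> H" "x \<in> topspace (realization k A)" "a = (g \<circ> h, x)" "b = (g, real_act k A h x)"
    then show ?thesis
      using smash_class_shift[OF G H HG A' _ _ real_map_topspace[OF H A A' s]] real_map_act[OF H A A' s] by simp
  qed
  from smash_descend[OF G H HG A p, of "\<lambda>q. smash_class k H G A' (fst q, real_map k A A' s (snd q))", OF this]
  show ?thesis by (simp add: smash_map_def Let_def smash_class_def)
qed

lemma is_lan_source_ss: "is_lan k H G A B eta \<Longrightarrow> is_ss k H A"
  by (simp add: is_lan_def)

lemma real_to_smash_natural:
  assumes G: "perm_subgroup k G" and H: "perm_subgroup k H" and HG: "H \<subseteq> G"
    and lan: "is_lan k H G A B eta" and lan': "is_lan k H G A' B' eta'"
    and psi: "nat_trans k H A A' \<psi>" and sigma: "nat_trans k G B B' \<sigma>"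
    and comm: "\<forall>n\<in>mdegs k. \<forall>a\<in>carr A n. \<sigma> n (eta n a) = eta' n (\<psi> n a)"
    and x: "x \<in> topspace (realization k B)"
  shows "real_to_smash k H G A' B' eta' (real_map k B B' \<sigma> x) =
    smash_map k H G A A' \<psi> (real_to_smash k H G A B eta x)"
proof -
  note A = is_lan_source_ss[OF lan] and A' = is_lan_source_ss[OF lan']
  note B = lan_ss[OF G H HG A lan] and B' = lan_ss[OF G H HG A' lan']
  obtain n u b where e: "n \<in> mdegs k" "u \<in> msimplex n" "b \<in> carr B n" "x = real_class k B (n, u, b)"
    using realization_B_pointE[OF G H HG A lan x] .
  obtain g m a where r: "some_lan_rep k G A B eta n b = (g, m, a)" by (cases "some_lan_rep k G A B eta n b")
  have t: "lan_rep k G A B eta n b (g, m, a)" using some_lan_rep_is_rep[OF G H HG A lan e(1,3)] r by simp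
  note rf = lan_rep_facts[OF G H HG A lan e(1,2) t]
  let ?v = "uperm k (inv g) u"
  have bb: "b = fmap B (g, cid m) (eta m a)" and pm: "plist g m = n"
    using t by (auto simp: lan_rep_triple[OF G H HG A lan])
  have "\<sigma> n b = fmap B' (g, cid m) (eta' m (\<psi> m a))"
    using nat_trans_fmap[OF sigma rf(1) cid_cmors[OF rf(2)]] nat_trans_carr[OF lan_unit[OF G H HG A lan] rf(2,3)]
      bb pm comm rf(2,3) by simp
  then have t': "lan_rep k G A' B' eta' n (\<sigma> n b) (g, m, \<psi> m a)"
    using rf pm nat_trans_carr[OF psi rf(2,3)] by (simp add: lan_rep_triple[OF G H HG A' lan'])
  have "real_to_smash k H G A' B' eta' (real_map k B B' \<sigma> x) =
      real_to_smash k H G A' B' eta' (real_class k B' (n, u, \<sigma> n b))"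
    using real_map_class[OF G B B' sigma, of n u b] e by simp
  also have "\<dots> = smash_class k H G A' (g, real_class k A' (m, ?v, \<psi> m a))"
    by (rule real_to_smash_triple[OF G H HG A' lan' e(1,2) nat_trans_carr[OF sigma e(1,3)] t'])
  also have "real_class k A' (m, ?v, \<psi> m a) = real_map k A A' \<psi> (real_class k A (m, ?v, a))"
    using real_map_class[OF H A A' psi, of m ?v a] rf by simp
  also have "smash_class k H G A' (g, \<dots>) = smash_map k H G A A' \<psi> (smash_class k H G A (g, real_class k A (m, ?v, a)))"
    using smash_map_class[OF G H HG A A' psi rf(1) real_class_A_topspace[OF G H HG A lan rf(2,4,3)]] by simp
  also have "smash_class k H G A (g, real_class k A (m, ?v, a)) = real_to_smash k H G A B eta x"
    using real_to_smash_triple[OF G H HG A lan e(1-3) t] e(4) by simp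
  finally show ?thesis .
qed

theorem proposition5p4:
  fixes k :: nat and H G :: "perm set"
  assumes "perm_subgroup k G" and "perm_subgroup k H" and "H \<subseteq> G"
  shows "\<exists>\<Phi> :: 'a ssobj \<Rightarrow> (gmor \<times> 'a) set ssobj \<Rightarrow> (mdeg \<Rightarrow> 'a \<Rightarrow> (gmor \<times> 'a) set)
               \<Rightarrow> (gmor \<times> 'a) set rpt \<Rightarrow> 'a spt.
     (\<forall>A B \<eta>. is_lan k H G A B \<eta> \<longrightarrow>
        based_G_homeo G (realization k B) (real_base k B) (real_act k B)
                        (smash k H G A) (smash_base k H G A) (smash_act k H G A) (\<Phi> A B \<eta>)) \<and>
     (\<forall>A A' B B' \<eta> \<eta>' \<psi> \<sigma>.
        is_lan k H G A B \<eta> \<and> is_lan k H G A' B' \<eta>' \<and> nat_trans k H A A' \<psi> \<and>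
        nat_trans k G B B' \<sigma> \<and> (\<forall>n\<in>mdegs k. \<forall>a\<in>carr A n. \<sigma> n (\<eta> n a) = \<eta>' n (\<psi> n a)) \<longrightarrow>
        (\<forall>x\<in>topspace (realization k B).
           \<Phi> A' B' \<eta>' (real_map k B B' \<sigma> x) = smash_map k H G A A' \<psi> (\<Phi> A B \<eta> x)))"
  using real_to_smash_based_G_homeo[OF assms is_lan_source_ss] real_to_smash_natural[OF assms]
  by (intro exI[of _ "real_to_smash k H G"]) blast

end
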